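(* (Mellin reproducing kernel formula.) Let $c\in\mathbb{R}$, $\sigma>0$ and $f\in\widetilde{B}^2_{c,\pi\sigma}$. Then for every $x\in\mathbb{R}^+$ $$f(x)=\sigma\int_0^\infty f(y)\,\mathrm{lin}_{c/\sigma}\Big(\big(\tfrac{x}{y}\big)^\sigma\Big)\frac{dy}{y},$$ the integral being absolutely convergent.
   Context: $\mathbb{R}^+=(0,\infty)$, $\Omega=\mathbb{C}\setminus[0,\infty)$. For $a\in\mathbb{R}$, $\mathrm{lin}_a:\mathbb{R}^+\to\mathbb{R}$ is $\mathrm{lin}_a(x)=\frac{x^{-a}}{2\pi i}\frac{x^{\pi i}-x^{-\pi i}}{\log x}=\frac{x^{-a}}{2\pi}\int_{-\pi}^{\pi}x^{-it}\,dt$ for $x\neq1$, and $\mathrm{lin}_a(1)=1$. For $c\in\mathbb{R}$, $X^2_c$ is the space of measurable $f:\mathbb{R}^+\to\mathbb{C}$ with $f(x)x^{c-1/2}\in L^2(\mathbb{R}^+)$. For $T>0$, the Mellin–Bernstein space $\widetilde{B}^2_{c,T}$ consists of all $f\in X^2_c$ such that $g(x):=x^cf(x)$ has an analytic extension to the Riemann surface of the logarithm, given by analytic branches $g_k:\Omega\to\mathbb{C}$, $k\in\mathbb{Z}$, with: (i) for every $x>0$ the limits $g_k^+(x)=\lim_{\varepsilon\to0^+}g_k(x+i\varepsilon)$ and $g_k^-(x)=\lim_{\varepsilon\to0^+}g_k(x-i\varepsilon)$ exist, $g_k^-(x)=g_{k+1}^+(x)$, and $g_0^+(x)=g(x)$;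 (ii) for every $x>0$ and every open disk $U_x$ in the right half-plane centered at $x$, the function $\psi_k:U_x\to\mathbb{C}$ equal to $g_k(z)$ for $\Im z<0$, to $g_k^-(z)$ for $z\in U_x\cap\mathbb{R}$, and to $g_{k+1}(z)$ for $\Im z>0$, is analytic; (iii) there is $C>0$ such that $|g_k(re^{i\theta})|\le Ce^{T|2\pi k+\theta|}$ for all $k\in\mathbb{Z}$, $\theta\in[0,2\pi]$, $r>0$; (iv) for each $k$, $\lim_{r\to0}g_k(re^{i\theta})=\lim_{r\to\infty}g_k(re^{i\theta})=0$ uniformly in $\theta\in[0,2\pi]$. In (iii) and (iv), $g_k(re^{i0})$ means $g_k^+(r)$ and $g_k(re^{2\pi i})$ means $g_k^-(r)$. *)

theory Defs
  imports "HOL-Analysis.Analysis"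
begin

text \<open>The function lin_a. For x \<noteq> 1 the paper's formula
  x^{-a}/(2 pi i) * (x^{pi i} - x^{-pi i}) / log x equals x^{-a} sin(pi log x)/(pi log x).\<close>
definition lin :: "real \<Rightarrow> real \<Rightarrow> real" where
  "lin a x = (if x = 1 then 1 else x powr (-a) * sin (pi * ln x) / (pi * ln x))"

text \<open>The space X^2_c (functions on (0,oo), values at x \<le> 0 irrelevant).\<close>
definition X2 :: "real \<Rightarrow> (real \<Rightarrow> complex) \<Rightarrow> bool" where
  "X2 c f \<longleftrightarrow> set_borel_measurable lebesgue {0<..} f \<and>
     set_integrable lebesgue {0<..} (\<lambda>x. (cmod (f x * of_real (x powr (c - 1/2))))\<^sup>2)"

definition slit :: "complex set" where
  "slit = UNIV - complex_of_real ` {0..}"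

text \<open>Values of the branch k on the ray of angle theta in [0, 2 pi], using the
  boundary limits gp (theta = 0) and gm (theta = 2 pi).\<close>
definition branch_val ::
  "(int \<Rightarrow> complex \<Rightarrow> complex) \<Rightarrow> (int \<Rightarrow> real \<Rightarrow> complex) \<Rightarrow> (int \<Rightarrow> real \<Rightarrow> complex)
    \<Rightarrow> int \<Rightarrow> real \<Rightarrow> real \<Rightarrow> complex" where
  "branch_val g gp gm k r \<theta> =
     (if \<theta> = 0 then gp k r else if \<theta> = 2 * pi then gm k r else g k (of_real r * cis \<theta>))"

definition mellin_bernstein :: "real \<Rightarrow> real \<Rightarrow> (real \<Rightarrow> complex) \<Rightarrow> bool" where
  "mellin_bernstein c T f \<longleftrightarrow> X2 c f \<and>
    (\<exists>(g :: int \<Rightarrow> complex \<Rightarrow> complex) (gp :: int \<Rightarrow> real \<Rightarrow> complex) (gm :: int \<Rightarrow> real \<Rightarrow> complex).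
       (\<forall>k. g k holomorphic_on slit) \<and>
       \<comment> \<open>(i)\<close>
       (\<forall>k. \<forall>x>0. ((\<lambda>\<epsilon>. g k (of_real x + \<i> * of_real \<epsilon>)) \<longlongrightarrow> gp k x) (at_right 0)) \<and>
       (\<forall>k. \<forall>x>0. ((\<lambda>\<epsilon>. g k (of_real x - \<i> * of_real \<epsilon>)) \<longlongrightarrow> gm k x) (at_right 0)) \<and>
       (\<forall>k. \<forall>x>0. gm k x = gp (k + 1) x) \<and>
       (\<forall>x>0. gp 0 x = of_real (x powr c) * f x) \<and>
       \<comment> \<open>(ii)\<close>
       (\<forall>k. \<forall>x>0. \<forall>r. 0 < r \<and> r \<le> x \<longrightarrow>
          (\<lambda>z. if Im z < 0 then g k z else if Im z = 0 then gm k (Re z) else g (k + 1) z)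
            analytic_on ball (of_real x) r) \<and>
       \<comment> \<open>(iii)\<close>
       (\<exists>C>0. \<forall>k. \<forall>\<theta>\<in>{0..2*pi}. \<forall>r>0.
          cmod (branch_val g gp gm k r \<theta>) \<le> C * exp (T * \<bar>2 * pi * of_int k + \<theta>\<bar>)) \<and>
       \<comment> \<open>(iv)\<close>
       (\<forall>k. \<forall>e>0. \<exists>d>0. \<forall>r. \<forall>\<theta>\<in>{0..2*pi}. 0 < r \<and> r < d \<longrightarrow>
          cmod (branch_val g gp gm k r \<theta>) < e) \<and>
       (\<forall>k. \<forall>e>0. \<exists>R. \<forall>r. \<forall>\<theta>\<in>{0..2*pi}. r > R \<longrightarrow>
          cmod (branch_val g gp gm k r \<theta>) < e))"

end

theory Submission
  imports Defs "HOL-Complex_Analysis.Complex_Analysis" "HOL-Real_Asymp.Real_Asymp"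
begin

(*
  The substitution y = e^u turns f into G(u) = e^{cu} f(e^u). Gluing the branches g_k along the
  sheets of the logarithm, G extends to an entire function of exponential type pi*sigma, and the
  X^2_c hypothesis says that G is square integrable on the real line. In these coordinates the
  claim is the Paley--Wiener reproducing formula G(t) = \<integral> G(u) sin(pi*sigma*(u-t))/(pi*(u-t)) du.

  To prove it, the sinc kernel is damped by the factors (1 -/+ i*eps*z)^-2, which make the integrand
  decay like 1/|z|^2 in a strip. The damped integral is shifted to the line Im z = -1, away from
  the removable singularity of the kernel, where the kernel splits into its e^{i*tau*z} and
  e^{-i*tau*z} parts. Closing the contour upwards for the first (Cauchy's integral formula) gives
  G(t), closing it downwards for the second (Cauchy's theorem) gives 0. Finally eps -> 0 by
  dominated convergence, with a dominating function built from |G(u)|^2.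
*)

section \<open>Horizontal lines and rectangles\<close>

lemma integrable_inverse_one_plus_square:
  "(\<lambda>x::real. 1 / (1 + (x - t)\<^sup>2)) integrable_on UNIV"
proof -
  have "set_integrable lborel (einterval (-\<infinity>) \<infinity>) (\<lambda>x::real. 1 / (1 + (x - t)\<^sup>2))"
  proof (rule interval_integral_FTC_nonneg(1)[where F = "\<lambda>x. arctan (x - t)" and A = "-(pi/2)" and B = "pi/2"])
    have "((\<lambda>x. arctan (x - t)) \<longlongrightarrow> - (pi / 2)) at_bot"
      by (rule filterlim_compose[OF tendsto_arctan_at_bot]) real_asymp
    then show "(((\<lambda>x. arctan (x - t)) \<circ> real_of_ereal) \<longlongrightarrow> - (pi / 2)) (at_right (- \<infinity>))"
      by (simp add: ereal_tendsto_simps)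
    have "((\<lambda>x. arctan (x - t)) \<longlongrightarrow> (pi / 2)) at_top"
      by (rule filterlim_compose[OF tendsto_arctan_at_top]) real_asymp
    then show "(((\<lambda>x. arctan (x - t)) \<circ> real_of_ereal) \<longlongrightarrow> pi / 2) (at_left \<infinity>)"
      by (simp add: ereal_tendsto_simps)
  qed (auto intro!: derivative_eq_intros simp: power2_eq_square add_nonneg_eq_0_iff inverse_eq_divide)
  then show ?thesis
    using set_borel_integral_eq_integral(1) by simp
qed

lemma tendsto_integral_symmetric_intervals:
  fixes h :: "real \<Rightarrow> 'a::euclidean_space"
  assumes "h absolutely_integrable_on UNIV"
  shows "(\<lambda>n. integral {-real n..real n} h) \<longlonglongrightarrow> integral UNIV h"
proof -
  define f where "f n x = (if x \<in> {-real n..real n} then h x else 0)" for n x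
  have "f n integrable_on UNIV" for n
  proof -
    have "h absolutely_integrable_on {-real n..real n}"
      using assms by (rule set_integrable_subset) auto
    then show ?thesis
      unfolding f_def absolutely_integrable_on_def integrable_restrict_UNIV by blast
  qed
  moreover have "(\<lambda>x. norm (h x)) integrable_on UNIV"
    using assms absolutely_integrable_on_def by blast
  moreover have "norm (f n x) \<le> norm (h x)" for n x
    by (simp add: f_def)
  moreover have "(\<lambda>n. f n x) \<longlonglongrightarrow> h x" for x
  proof (rule tendsto_eventually)
    obtain N :: nat where "\<bar>x\<bar> \<le> real N" using real_arch_simple by blast
    then show "\<forall>\<^sub>F n in sequentially. f n x = h x"
      unfolding eventually_sequentially f_def by (intro exI[of _ N]) auto
  qed
  ultimately have "(\<lambda>n. integral UNIV (f n)) \<longlonglongrightarrow> integral UNIV h"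
    by (rule dominated_convergence(2))
  moreover have "integral UNIV (f n) = integral {-real n..real n} h" for n
    unfolding f_def by (rule integral_restrict_UNIV)
  ultimately show ?thesis
    by simp
qed

lemma absolutely_integrable_if_inverse_square_decay:
  fixes h :: "real \<Rightarrow> 'a::euclidean_space"
  assumes cont: "continuous_on UNIV h"
    and decay: "\<And>u. 1 \<le> \<bar>u - t\<bar> \<Longrightarrow> norm (h u) \<le> B / (1 + (u - t)\<^sup>2)"
  shows "h absolutely_integrable_on UNIV"
proof -
  have "compact (h ` {t-1..t+1})"
    by (rule compact_continuous_image) (auto intro: continuous_on_subset[OF cont])
  then obtain M where M: "\<And>u. u \<in> {t-1..t+1} \<Longrightarrow> norm (h u) \<le> M"
    using compact_imp_bounded bounded_iff by (metis image_eqI)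
  define K where "K = 2 * max M 0 + max B 0"
  have "norm (h u) \<le> K * (1 / (1 + (u - t)\<^sup>2))" for u
  proof (cases "1 \<le> \<bar>u - t\<bar>")
    case True
    have "norm (h u) \<le> B / (1 + (u - t)\<^sup>2)"
      using decay True by blast
    also have "\<dots> \<le> max B 0 / (1 + (u - t)\<^sup>2)"
      by (intro divide_right_mono) (auto simp: add_pos_nonneg)
    finally show ?thesis
      using add_pos_nonneg[of 1 "(u-t)\<^sup>2"] by (simp add: K_def field_simps)
  next
    case False
    then have "(u - t)\<^sup>2 \<le> 1" "u \<in> {t-1..t+1}"
      using abs_square_le_1[of "u - t"] by auto
    moreover have "norm (h u) \<le> max M 0"
      using M[of u] \<open>u \<in> {t-1..t+1}\<close> by linarith
    ultimately have "norm (h u) * (1 + (u - t)\<^sup>2) \<le> max M 0 * 2"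
      by (intro mult_mono) auto
    then show ?thesis
      using add_pos_nonneg[of 1 "(u-t)\<^sup>2"] by (simp add: K_def field_simps)
  qed
  moreover have "(\<lambda>u. K * (1 / (1 + (u - t)\<^sup>2))) integrable_on UNIV"
    by (intro integrable_on_mult_right integrable_inverse_one_plus_square)
  moreover have "h \<in> borel_measurable (lebesgue_on UNIV)"
    using cont by (rule continuous_imp_measurable_on_sets_lebesgue) auto
  ultimately show ?thesis
    by (intro measurable_bounded_by_integrable_imp_absolutely_integrable) auto
qed

lemma contour_integral_horizontal_linepath:
  fixes F :: "complex \<Rightarrow> complex"
  assumes "a < b" and cont: "continuous_on (closed_segment (Complex a y) (Complex b y)) F"
  shows "contour_integral (linepath (Complex a y) (Complex b y)) F = integral {a..b} (\<lambda>u. F (Complex u y))"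
    and "contour_integral (linepath (Complex b y) (Complex a y)) F = - integral {a..b} (\<lambda>u. F (Complex u y))"
proof -
  have shift: "linepath (Complex a y) (Complex b y) x = linepath (of_real a) (of_real b) x + \<i> * of_real y" for x
    by (simp add: linepath_def complex_eq_iff algebra_simps)
  have diff: "Complex b y - Complex a y = of_real b - of_real a"
    by (simp add: complex_eq_iff)
  have "continuous_on {a..b} (\<lambda>u. F (Complex u y))"
    using \<open>a < b\<close> by (intro continuous_on_compose2[OF cont])
      (auto simp: Complex_eq closed_segment_same_Im closed_segment_eq_real_ivl intro!: continuous_intros)
  then have "((\<lambda>u. F (Complex u y)) has_integral integral {a..b} (\<lambda>u. F (Complex u y))) {a..b}"
    by (intro integrable_integral integrable_continuous_real)
  then have "((\<lambda>u. F (of_real u + \<i> * of_real y)) has_integral integral {a..b} (\<lambda>u. F (Complex u y))) {a..b}"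
    by (simp add: Complex_eq)
  then have "((\<lambda>z. F (z + \<i> * of_real y)) has_contour_integral integral {a..b} (\<lambda>u. F (Complex u y)))
               (linepath (of_real a) (of_real b))"
    using \<open>a < b\<close> by (subst has_contour_integral_linepath_Reals_iff) auto
  then have "(F has_contour_integral integral {a..b} (\<lambda>u. F (Complex u y))) (linepath (Complex a y) (Complex b y))"
    unfolding has_contour_integral_linepath shift diff .
  then show first: "contour_integral (linepath (Complex a y) (Complex b y)) F = integral {a..b} (\<lambda>u. F (Complex u y))"
    by (rule contour_integral_unique)
  show "contour_integral (linepath (Complex b y) (Complex a y)) F = - integral {a..b} (\<lambda>u. F (Complex u y))"
    using contour_integral_reverse_linepath[OF cont] first by simp
qed

lemma contour_integral_rectpath_sides:
  fixes F :: "complex \<Rightarrow> complex"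
  assumes "continuous_on (path_image (rectpath a b)) F"
  shows "contour_integral (rectpath a b) F =
           contour_integral (linepath a (Complex (Re b) (Im a))) F
         + contour_integral (linepath (Complex (Re b) (Im a)) b) F
         + contour_integral (linepath b (Complex (Re a) (Im b))) F
         + contour_integral (linepath (Complex (Re a) (Im b)) a) F"
proof -
  define a2 a4 where "a2 = Complex (Re b) (Im a)" and "a4 = Complex (Re a) (Im b)"
  have "path_image (rectpath a b) =
          closed_segment a a2 \<union> closed_segment a2 b \<union> closed_segment b a4 \<union> closed_segment a4 a"
    by (simp add: rectpath_def Let_def path_image_join a2_def a4_def Un_assoc)
  then have "F contour_integrable_on linepath p q"
    if "(p, q) \<in> {(a, a2), (a2, b), (b, a4), (a4, a)}" for p q
    using that by (auto intro!: contour_integrable_continuous_linepath continuous_on_subset[OF assms])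
  then show ?thesis
    unfolding rectpath_def Let_def a2_def[symmetric] a4_def[symmetric] by (simp add: valid_path_join)
qed

lemma contour_integral_rectpath_Cauchy_theorem:
  assumes "F holomorphic_on cbox a b" "Re a \<le> Re b" "Im a \<le> Im b"
  shows "contour_integral (rectpath a b) F = 0"
  using Cauchy_theorem_convex_simple[OF assms(1) convex_box(1)] path_image_rectpath_subset_cbox[OF assms(2,3)]
  by (simp add: contour_integral_unique)

lemma contour_integral_rectpath_Cauchy_formula:
  assumes "H holomorphic_on cbox a b" "z \<in> box a b"
  shows "contour_integral (rectpath a b) (\<lambda>w. H w / (w - z)) = 2 * pi * \<i> * H z"
proof -
  have "Re a \<le> Re b" "Im a \<le> Im b"
    using assms(2) by (auto simp: in_box_complex_iff)
  then have "path_image (rectpath a b) \<subseteq> cbox a b - {z}"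
    using assms(2) by (auto simp: path_image_rectpath_cbox_minus_box)
  then have "((\<lambda>w. H w / (w - z)) has_contour_integral 2 * pi * \<i> * winding_number (rectpath a b) z * H z) (rectpath a b)"
    using assms by (intro Cauchy_integral_formula_convex_simple) auto
  then show ?thesis
    using winding_number_rectpath[OF assms(2)] by (simp add: contour_integral_unique)
qed

lemma contour_integral_linepath_tendsto_0:
  fixes F :: "complex \<Rightarrow> complex" and p q :: "nat \<Rightarrow> complex" and M :: "nat \<Rightarrow> real"
  assumes "\<forall>\<^sub>F n in sequentially. F contour_integrable_on linepath (p n) (q n) \<and>
             (\<forall>z\<in>closed_segment (p n) (q n). norm (F z) \<le> M n)"
    and "(\<lambda>n. M n * norm (q n - p n)) \<longlonglongrightarrow> 0"
  shows "(\<lambda>n. contour_integral (linepath (p n) (q n)) F) \<longlonglongrightarrow> 0"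
proof (rule Lim_null_comparison[OF _ assms(2)])
  show "\<forall>\<^sub>F n in sequentially. norm (contour_integral (linepath (p n) (q n)) F) \<le> M n * norm (q n - p n)"
    using assms(1)
  proof (rule eventually_mono, elim conjE)
    fix n
    assume int: "F contour_integrable_on linepath (p n) (q n)"
      and bound: "\<forall>z\<in>closed_segment (p n) (q n). norm (F z) \<le> M n"
    then have "0 \<le> M n"
      using norm_ge_zero order_trans ends_in_segment(1) by blast
    then show "norm (contour_integral (linepath (p n) (q n)) F) \<le> M n * norm (q n - p n)"
      using int bound by (intro contour_integral_bound_linepath) auto
  qed
qed

lemma contour_integral_vertical_linepath_tendsto_0:
  fixes F :: "complex \<Rightarrow> complex" and x a b M :: "nat \<Rightarrow> real"
  assumes "\<forall>\<^sub>F n in sequentially. continuous_on (closed_segment (Complex (x n) (a n)) (Complex (x n) (b n))) F \<and>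
             (\<forall>z. Re z = x n \<longrightarrow> Im z \<in> closed_segment (a n) (b n) \<longrightarrow> norm (F z) \<le> M n)"
    and "(\<lambda>n. M n * \<bar>b n - a n\<bar>) \<longlonglongrightarrow> 0"
  shows "(\<lambda>n. contour_integral (linepath (Complex (x n) (a n)) (Complex (x n) (b n))) F) \<longlonglongrightarrow> 0"
  using assms
  by (intro contour_integral_linepath_tendsto_0[where M = M])
     (auto elim!: eventually_mono intro: contour_integrable_continuous_linepath
        simp: closed_segment_same_Re cmod_def)

lemma contour_integral_horizontal_linepath_tendsto_0:
  fixes F :: "complex \<Rightarrow> complex" and y a b M :: "nat \<Rightarrow> real"
  assumes "\<forall>\<^sub>F n in sequentially. continuous_on (closed_segment (Complex (a n) (y n)) (Complex (b n) (y n))) F \<and>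
             (\<forall>z. Im z = y n \<longrightarrow> Re z \<in> closed_segment (a n) (b n) \<longrightarrow> norm (F z) \<le> M n)"
    and "(\<lambda>n. M n * \<bar>b n - a n\<bar>) \<longlonglongrightarrow> 0"
  shows "(\<lambda>n. contour_integral (linepath (Complex (a n) (y n)) (Complex (b n) (y n))) F) \<longlonglongrightarrow> 0"
  using assms
  by (intro contour_integral_linepath_tendsto_0[where M = M])
     (auto elim!: eventually_mono intro: contour_integrable_continuous_linepath
        simp: closed_segment_same_Im cmod_def)

lemma integral_UNIV_eq_if_symmetric_truncations:
  fixes h :: "real \<Rightarrow> 'a::euclidean_space"
  assumes "h absolutely_integrable_on UNIV"
    and "\<forall>\<^sub>F n in sequentially. integral {-real n..real n} h + R n = c"
    and "R \<longlonglongrightarrow> d"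
  shows "integral UNIV h = c - d"
proof -
  have "(\<lambda>n. integral {-real n..real n} h + R n) \<longlonglongrightarrow> integral UNIV h + d"
    by (intro tendsto_add tendsto_integral_symmetric_intervals assms)
  moreover have "(\<lambda>n. integral {-real n..real n} h + R n) \<longlonglongrightarrow> c"
    by (rule tendsto_eventually[OF assms(2)])
  ultimately have "integral UNIV h + d = c"
    by (rule LIMSEQ_unique)
  then show ?thesis
    by (simp add: algebra_simps)
qed

section \<open>Shifting lines of integration\<close>

lemma integral_horizontal_line_shift:
  fixes F :: "complex \<Rightarrow> complex" and t B y0 y1 :: real
  assumes "y0 < y1" and holo: "F holomorphic_on {z. y0 \<le> Im z \<and> Im z \<le> y1}"
    and decay: "\<And>z. y0 \<le> Im z \<Longrightarrow> Im z \<le> y1 \<Longrightarrow> 1 \<le> \<bar>Re z - t\<bar> \<Longrightarrow> norm (F z) \<le> B / (1 + (Re z - t)\<^sup>2)"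
  shows "(\<lambda>u. F (Complex u y0)) absolutely_integrable_on UNIV"
    and "(\<lambda>u. F (Complex u y1)) absolutely_integrable_on UNIV"
    and "integral UNIV (\<lambda>u. F (Complex u y0)) = integral UNIV (\<lambda>u. F (Complex u y1))"
proof -
  define S where "S = {z. y0 \<le> Im z \<and> Im z \<le> y1}"
  have convS: "convex S"
    using convex_Int[OF convex_halfspace_Im_ge[of y0] convex_halfspace_Im_le[of y1]]
    by (simp add: S_def Collect_conj_eq)
  have contF: "continuous_on S F"
    using holo holomorphic_on_imp_continuous_on S_def by blast
  have contF_seg: "continuous_on (closed_segment p q) F" if "p \<in> S" "q \<in> S" for p q
    using that convS closed_segment_subset continuous_on_subset[OF contF] by metis
  have line_integrable: "(\<lambda>u. F (Complex u y)) absolutely_integrable_on UNIV" if "y0 \<le> y" "y \<le> y1" for y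
  proof (rule absolutely_integrable_if_inverse_square_decay[where t = t and B = B])
    show "continuous_on UNIV (\<lambda>u. F (Complex u y))"
      using that by (intro continuous_on_compose2[OF contF]) (auto simp: S_def Complex_eq intro!: continuous_intros)
    show "norm (F (Complex u y)) \<le> B / (1 + (u - t)\<^sup>2)" if "1 \<le> \<bar>u - t\<bar>" for u
      using decay[of "Complex u y"] that \<open>y0 \<le> y\<close> \<open>y \<le> y1\<close> by simp
  qed
  show ai0: "(\<lambda>u. F (Complex u y0)) absolutely_integrable_on UNIV"
    and ai1: "(\<lambda>u. F (Complex u y1)) absolutely_integrable_on UNIV"
    using line_integrable \<open>y0 < y1\<close> by auto
  define right where "right n = contour_integral (linepath (Complex (real n) y0) (Complex (real n) y1)) F" for n
  define left where "left n = contour_integral (linepath (Complex (- real n) y1) (Complex (- real n) y0)) F" for n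
  have large: "\<forall>\<^sub>F n in sequentially. \<bar>t\<bar> + 1 \<le> real n"
    by real_asymp
  have "integral {-real n..real n} (\<lambda>u. F (Complex u y0))
          + (right n - integral {-real n..real n} (\<lambda>u. F (Complex u y1)) + left n) = 0"
    if n: "\<bar>t\<bar> + 1 \<le> real n" for n
  proof -
    let ?a = "Complex (- real n) y0" and ?b = "Complex (real n) y1"
    have "cbox ?a ?b \<subseteq> S"
      by (auto simp: S_def in_cbox_complex_iff)
    then have "contour_integral (rectpath ?a ?b) F = 0"
      using n \<open>y0 < y1\<close>
      by (intro contour_integral_rectpath_Cauchy_theorem holomorphic_on_subset[OF holo[folded S_def]]) auto
    moreover have "path_image (rectpath ?a ?b) \<subseteq> S"
      using path_image_rectpath_subset_cbox[of ?a ?b] n \<open>y0 < y1\<close> \<open>cbox ?a ?b \<subseteq> S\<close> by auto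
    moreover have "contour_integral (rectpath ?a ?b) F =
        integral {-real n..real n} (\<lambda>u. F (Complex u y0)) + right n
          - integral {-real n..real n} (\<lambda>u. F (Complex u y1)) + left n"
      using n \<open>y0 < y1\<close> \<open>path_image (rectpath ?a ?b) \<subseteq> S\<close>
      by (simp add: contour_integral_rectpath_sides continuous_on_subset[OF contF]
            contour_integral_horizontal_linepath contF_seg S_def right_def left_def)
    ultimately show ?thesis
      by (simp add: algebra_simps)
  qed
  then have trunc: "\<forall>\<^sub>F n in sequentially. integral {-real n..real n} (\<lambda>u. F (Complex u y0))
          + (right n - integral {-real n..real n} (\<lambda>u. F (Complex u y1)) + left n) = 0"
    using large by (auto elim: eventually_mono)
  have "right \<longlonglongrightarrow> 0"
    unfolding right_def
  proof (rule contour_integral_vertical_linepath_tendsto_0[where M = "\<lambda>n. B / (1 + (real n - t)\<^sup>2)"])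
    show "(\<lambda>n. B / (1 + (real n - t)\<^sup>2) * \<bar>y1 - y0\<bar>) \<longlonglongrightarrow> 0"
      by real_asymp
  qed (use large \<open>y0 < y1\<close> decay in \<open>auto elim!: eventually_mono intro!: contF_seg
         simp: S_def closed_segment_eq_real_ivl; fastforce\<close>)
  moreover have "left \<longlonglongrightarrow> 0"
    unfolding left_def
  proof (rule contour_integral_vertical_linepath_tendsto_0[where M = "\<lambda>n. B / (1 + (real n + t)\<^sup>2)"])
    show "(\<lambda>n. B / (1 + (real n + t)\<^sup>2) * \<bar>y0 - y1\<bar>) \<longlonglongrightarrow> 0"
      by real_asymp
  qed (use large \<open>y0 < y1\<close> decay in \<open>auto elim!: eventually_mono intro!: contF_seg
         simp: S_def closed_segment_eq_real_ivl; fastforce simp: power2_commute add.commute\<close>)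
  ultimately have "(\<lambda>n. right n - integral {-real n..real n} (\<lambda>u. F (Complex u y1)) + left n)
                     \<longlonglongrightarrow> 0 - integral UNIV (\<lambda>u. F (Complex u y1)) + 0"
    by (intro tendsto_intros tendsto_integral_symmetric_intervals ai1)
  from integral_UNIV_eq_if_symmetric_truncations[OF ai0 trunc this]
  show "integral UNIV (\<lambda>u. F (Complex u y0)) = integral UNIV (\<lambda>u. F (Complex u y1))"
    by simp
qed

lemma norm_divide_sub_real_le:
  fixes H :: "complex \<Rightarrow> complex" and t :: real
  assumes bound: "norm (H z) \<le> B / (1 + (cmod (z - t))\<^sup>2)" and far: "1 \<le> cmod (z - t)"
  shows "norm (H z / (z - t)) \<le> B / (1 + (Re z - t)\<^sup>2)"
    and "norm (H z / (z - t)) \<le> B / (1 + (Im z)\<^sup>2)"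
proof -
  have "0 < 1 + (cmod (z - t))\<^sup>2"
    by (simp add: add_pos_nonneg)
  then have "0 \<le> B"
    using order_trans[OF norm_ge_zero bound] by (simp add: zero_le_divide_iff)
  have "norm (H z / (z - t)) = norm (H z) / cmod (z - t)"
    by (simp add: norm_divide)
  also have "\<dots> \<le> norm (H z) / 1"
    using far by (intro divide_left_mono) auto
  also have "\<dots> \<le> B / (1 + (cmod (z - t))\<^sup>2)"
    using bound by simp
  finally have *: "norm (H z / (z - t)) \<le> B / (1 + (cmod (z - t))\<^sup>2)" .
  have smaller: "B / (1 + (cmod (z - t))\<^sup>2) \<le> B / (1 + s\<^sup>2)" if "\<bar>s\<bar> \<le> cmod (z - t)" for s
  proof (rule divide_left_mono)
    show "1 + s\<^sup>2 \<le> 1 + (cmod (z - t))\<^sup>2"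
      using that by (simp add: abs_le_square_iff[symmetric])
  qed (use \<open>0 \<le> B\<close> in \<open>auto intro!: mult_pos_pos add_pos_nonneg\<close>)
  show "norm (H z / (z - t)) \<le> B / (1 + (Re z - t)\<^sup>2)"
    using order_trans[OF * smaller] abs_Re_le_cmod[of "z - t"] by simp
  show "norm (H z / (z - t)) \<le> B / (1 + (Im z)\<^sup>2)"
    using order_trans[OF * smaller] abs_Im_le_cmod[of "z - t"] by simp
qed

lemma Cauchy_integral_formula_horizontal_line:
  fixes H :: "complex \<Rightarrow> complex" and t B :: real
  assumes holo: "H holomorphic_on {z. -1 \<le> Im z}"
    and decay: "\<And>z::complex. -1 \<le> Im z \<Longrightarrow> norm (H z) \<le> B / (1 + (cmod (z - t))\<^sup>2)"
  shows "(\<lambda>u. H (Complex u (-1)) / (Complex u (-1) - t)) absolutely_integrable_on UNIV"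
    and "integral UNIV (\<lambda>u. H (Complex u (-1)) / (Complex u (-1) - t)) = 2 * pi * \<i> * H t"
proof -
  define S where "S = {z. -1 \<le> Im z}"
  define F where "F w = H w / (w - t)" for w
  have contF: "continuous_on (S - {of_real t}) F"
    unfolding F_def using holo
    by (intro continuous_intros continuous_on_subset[OF holomorphic_on_imp_continuous_on]) (auto simp: S_def)
  have decay_Re: "norm (F z) \<le> B / (1 + (x - t)\<^sup>2)" if "Re z = x" "-1 \<le> Im z" "1 \<le> \<bar>x - t\<bar>" for z x
    unfolding F_def using decay that abs_Re_le_cmod[of "z - t"] norm_divide_sub_real_le(1) by auto
  have decay_Im: "norm (F z) \<le> B / (1 + y\<^sup>2)" if "Im z = y" "1 \<le> y" for z y
    using that decay[of z] abs_Im_le_cmod[of "z - t"] norm_divide_sub_real_le(2) unfolding F_def by auto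
  have ai: "(\<lambda>u. F (Complex u (-1))) absolutely_integrable_on UNIV"
  proof (rule absolutely_integrable_if_inverse_square_decay[where t = t and B = B])
    show "continuous_on UNIV (\<lambda>u. F (Complex u (-1)))"
      by (intro continuous_on_compose2[OF contF]) (auto simp: S_def Complex_eq complex_eq_iff intro!: continuous_intros)
    show "norm (F (Complex u (-1))) \<le> B / (1 + (u - t)\<^sup>2)" if "1 \<le> \<bar>u - t\<bar>" for u
      using that by (intro decay_Re) auto
  qed
  then show "(\<lambda>u. H (Complex u (-1)) / (Complex u (-1) - t)) absolutely_integrable_on UNIV"
    by (simp add: F_def)
  define right where "right n = contour_integral (linepath (Complex (real n) (-1)) (Complex (real n) (real n))) F" for n
  define top where "top n = contour_integral (linepath (Complex (real n) (real n)) (Complex (- real n) (real n))) F" for n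
  define left where "left n = contour_integral (linepath (Complex (- real n) (real n)) (Complex (- real n) (-1))) F" for n
  have large: "\<forall>\<^sub>F n in sequentially. \<bar>t\<bar> + 1 \<le> real n"
    by real_asymp
  have "integral {-real n..real n} (\<lambda>u. F (Complex u (-1))) + (right n + top n + left n) = 2 * pi * \<i> * H t"
    if n: "\<bar>t\<bar> + 1 \<le> real n" for n
  proof -
    let ?a = "Complex (- real n) (-1)" and ?b = "Complex (real n) (real n)"
    have t_inside: "of_real t \<in> box ?a ?b"
      using n by (auto simp: in_box_complex_iff)
    have box: "cbox ?a ?b \<subseteq> S"
      by (auto simp: S_def in_cbox_complex_iff)
    have image: "path_image (rectpath ?a ?b) \<subseteq> S - {of_real t}"
      using path_image_rectpath_cbox_minus_box[of ?a ?b] t_inside n box by auto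
    have "contour_integral (rectpath ?a ?b) F = 2 * pi * \<i> * H t"
      unfolding F_def using t_inside box
      by (intro contour_integral_rectpath_Cauchy_formula holomorphic_on_subset[OF holo[folded S_def]])
    moreover have "contour_integral (rectpath ?a ?b) F =
        integral {-real n..real n} (\<lambda>u. F (Complex u (-1))) + right n + top n + left n"
    proof -
      have "closed_segment (Complex (- real n) (-1)) (Complex (real n) (-1)) \<subseteq> S - {of_real t}"
        by (auto simp: S_def closed_segment_same_Im complex_eq_iff)
      then have "contour_integral (linepath ?a (Complex (real n) (-1))) F
                   = integral {-real n..real n} (\<lambda>u. F (Complex u (-1)))"
        using n by (intro contour_integral_horizontal_linepath(1) continuous_on_subset[OF contF]) auto
      then show ?thesis
        using contour_integral_rectpath_sides[OF continuous_on_subset[OF contF image]]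
        by (simp add: right_def top_def left_def)
    qed
    ultimately show ?thesis
      by (simp add: algebra_simps)
  qed
  then have trunc: "\<forall>\<^sub>F n in sequentially.
      integral {-real n..real n} (\<lambda>u. F (Complex u (-1))) + (right n + top n + left n) = 2 * pi * \<i> * H t"
    using large by (auto elim: eventually_mono)
  have vertical: "continuous_on (closed_segment (Complex x y0) (Complex x y1)) F"
    if "x \<noteq> t" "-1 \<le> y0" "-1 \<le> y1" for x y0 y1
    by (rule continuous_on_subset[OF contF])
       (use that in \<open>auto simp: S_def closed_segment_same_Re closed_segment_eq_real_ivl split: if_splits\<close>)
  have horizontal: "continuous_on (closed_segment (Complex x0 y) (Complex x1 y)) F" if "0 < y" for x0 x1 y
    by (rule continuous_on_subset[OF contF])
       (use that in \<open>auto simp: S_def closed_segment_same_Im complex_eq_iff\<close>)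
  have "right \<longlonglongrightarrow> 0"
    unfolding right_def
  proof (rule contour_integral_vertical_linepath_tendsto_0[where M = "\<lambda>n. B / (1 + (real n - t)\<^sup>2)"])
    show "\<forall>\<^sub>F n in sequentially.
        continuous_on (closed_segment (Complex (real n) (-1)) (Complex (real n) (real n))) F \<and>
        (\<forall>z. Re z = real n \<longrightarrow> Im z \<in> closed_segment (-1) (real n) \<longrightarrow> norm (F z) \<le> B / (1 + (real n - t)\<^sup>2))"
      using large
      by (eventually_elim, intro conjI vertical allI impI)
         (auto simp: closed_segment_eq_real_ivl intro!: decay_Re)
    show "(\<lambda>n. B / (1 + (real n - t)\<^sup>2) * \<bar>real n - - 1\<bar>) \<longlonglongrightarrow> 0"
      by real_asymp
  qed
  moreover have "top \<longlonglongrightarrow> 0"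
    unfolding top_def
  proof (rule contour_integral_horizontal_linepath_tendsto_0[where M = "\<lambda>n. B / (1 + (real n)\<^sup>2)"])
    show "\<forall>\<^sub>F n in sequentially.
        continuous_on (closed_segment (Complex (real n) (real n)) (Complex (- real n) (real n))) F \<and>
        (\<forall>z. Im z = real n \<longrightarrow> Re z \<in> closed_segment (real n) (- real n) \<longrightarrow> norm (F z) \<le> B / (1 + (real n)\<^sup>2))"
      using large
      by (eventually_elim, intro conjI horizontal allI impI) (auto intro!: decay_Im)
    show "(\<lambda>n. B / (1 + (real n)\<^sup>2) * \<bar>- real n - real n\<bar>) \<longlonglongrightarrow> 0"
      by real_asymp
  qed
  moreover have "left \<longlonglongrightarrow> 0"
    unfolding left_def
  proof (rule contour_integral_vertical_linepath_tendsto_0[where M = "\<lambda>n. B / (1 + (- real n - t)\<^sup>2)"])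
    show "\<forall>\<^sub>F n in sequentially.
        continuous_on (closed_segment (Complex (- real n) (real n)) (Complex (- real n) (-1))) F \<and>
        (\<forall>z. Re z = - real n \<longrightarrow> Im z \<in> closed_segment (real n) (-1) \<longrightarrow> norm (F z) \<le> B / (1 + (- real n - t)\<^sup>2))"
      using large
      by (eventually_elim, intro conjI vertical allI impI)
         (auto simp: closed_segment_eq_real_ivl intro!: decay_Re)
    show "(\<lambda>n. B / (1 + (- real n - t)\<^sup>2) * \<bar>- 1 - real n\<bar>) \<longlonglongrightarrow> 0"
      by real_asymp
  qed
  ultimately have "(\<lambda>n. right n + top n + left n) \<longlonglongrightarrow> 0 + 0 + 0"
    by (intro tendsto_add)
  from integral_UNIV_eq_if_symmetric_truncations[OF ai trunc this]
  show "integral UNIV (\<lambda>u. H (Complex u (-1)) / (Complex u (-1) - t)) = 2 * pi * \<i> * H t"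
    by (simp add: F_def)
qed

lemma Cauchy_theorem_horizontal_line:
  fixes H :: "complex \<Rightarrow> complex" and t B :: real
  assumes holo: "H holomorphic_on {z. Im z \<le> -1}"
    and decay: "\<And>z::complex. Im z \<le> -1 \<Longrightarrow> norm (H z) \<le> B / (1 + (cmod (z - t))\<^sup>2)"
  shows "(\<lambda>u. H (Complex u (-1)) / (Complex u (-1) - t)) absolutely_integrable_on UNIV"
    and "integral UNIV (\<lambda>u. H (Complex u (-1)) / (Complex u (-1) - t)) = 0"
proof -
  define S where "S = {z. Im z \<le> -1}"
  define F where "F w = H w / (w - t)" for w
  have holF: "F holomorphic_on S"
    unfolding F_def using holo by (intro holomorphic_intros) (auto simp: S_def complex_eq_iff)
  have contF_seg: "continuous_on (closed_segment p q) F" if "p \<in> S" "q \<in> S" for p q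
    using holomorphic_on_imp_continuous_on[OF holF] that convex_halfspace_Im_le closed_segment_subset
      continuous_on_subset unfolding S_def by metis
  have far: "1 \<le> cmod (z - t)" if "Im z \<le> -1" for z
    using that abs_Im_le_cmod[of "z - t"] by simp
  have decay_Re: "norm (F z) \<le> B / (1 + (x - t)\<^sup>2)" if "Re z = x" "Im z \<le> -1" for z x
    unfolding F_def using decay that far norm_divide_sub_real_le(1) by blast
  have decay_Im: "norm (F z) \<le> B / (1 + y\<^sup>2)" if "Im z = - y" "1 \<le> y" for z y
    unfolding F_def using decay[of z] that far[of z] norm_divide_sub_real_le(2)[of H z B t] by simp
  have ai: "(\<lambda>u. F (Complex u (-1))) absolutely_integrable_on UNIV"
  proof (rule absolutely_integrable_if_inverse_square_decay[where t = t and B = B])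
    show "continuous_on UNIV (\<lambda>u. F (Complex u (-1)))"
      by (intro continuous_on_compose2[OF holomorphic_on_imp_continuous_on[OF holF]])
         (auto simp: S_def Complex_eq intro!: continuous_intros)
  qed (auto intro!: decay_Re)
  then show "(\<lambda>u. H (Complex u (-1)) / (Complex u (-1) - t)) absolutely_integrable_on UNIV"
    by (simp add: F_def)
  define right where "right n = contour_integral (linepath (Complex (real n) (- real n)) (Complex (real n) (-1))) F" for n
  define bottom where "bottom n = contour_integral (linepath (Complex (- real n) (- real n)) (Complex (real n) (- real n))) F" for n
  define left where "left n = contour_integral (linepath (Complex (- real n) (-1)) (Complex (- real n) (- real n))) F" for n
  have large: "\<forall>\<^sub>F n in sequentially. 1 \<le> real n"
    by real_asymp
  have rect: "integral {-real n..real n} (\<lambda>u. F (Complex u (-1))) + - (bottom n + right n + left n) = 0"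
    if n: "1 \<le> real n" for n
  proof -
    let ?a = "Complex (- real n) (- real n)" and ?b = "Complex (real n) (-1)"
    have box: "cbox ?a ?b \<subseteq> S"
      by (auto simp: S_def in_cbox_complex_iff)
    have "contour_integral (rectpath ?a ?b) F = 0"
      using n box by (intro contour_integral_rectpath_Cauchy_theorem holomorphic_on_subset[OF holF]) auto
    moreover have "path_image (rectpath ?a ?b) \<subseteq> S"
      using path_image_rectpath_subset_cbox[of ?a ?b] n box by auto
    then have "contour_integral (rectpath ?a ?b) F =
        bottom n + right n - integral {-real n..real n} (\<lambda>u. F (Complex u (-1))) + left n"
      using n contour_integral_rectpath_sides[OF continuous_on_subset[OF holomorphic_on_imp_continuous_on[OF holF]]]
      by (simp add: contour_integral_horizontal_linepath contF_seg S_def bottom_def right_def left_def)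
    ultimately show ?thesis
      by (simp add: algebra_simps)
  qed
  have trunc: "\<forall>\<^sub>F n in sequentially.
      integral {-real n..real n} (\<lambda>u. F (Complex u (-1))) + - (bottom n + right n + left n) = 0"
    by (rule eventually_mono[OF large rect])
  have "bottom \<longlonglongrightarrow> 0"
    unfolding bottom_def
  proof (rule contour_integral_horizontal_linepath_tendsto_0[where M = "\<lambda>n. B / (1 + (real n)\<^sup>2)"])
    show "(\<lambda>n. B / (1 + (real n)\<^sup>2) * \<bar>real n - - real n\<bar>) \<longlonglongrightarrow> 0"
      by real_asymp
  qed (use large in \<open>eventually_elim, auto intro!: contF_seg decay_Im simp: S_def\<close>)
  moreover have "right \<longlonglongrightarrow> 0"
    unfolding right_def
  proof (rule contour_integral_vertical_linepath_tendsto_0[where M = "\<lambda>n. B / (1 + (real n - t)\<^sup>2)"])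
    show "(\<lambda>n. B / (1 + (real n - t)\<^sup>2) * \<bar>- 1 - - real n\<bar>) \<longlonglongrightarrow> 0"
      by real_asymp
  qed (use large in \<open>eventually_elim, auto intro!: contF_seg decay_Re simp: S_def closed_segment_eq_real_ivl\<close>)
  moreover have "left \<longlonglongrightarrow> 0"
    unfolding left_def
  proof (rule contour_integral_vertical_linepath_tendsto_0[where M = "\<lambda>n. B / (1 + (- real n - t)\<^sup>2)"])
    show "(\<lambda>n. B / (1 + (- real n - t)\<^sup>2) * \<bar>- real n - - 1\<bar>) \<longlonglongrightarrow> 0"
      by real_asymp
  qed (use large in \<open>eventually_elim, auto intro!: contF_seg decay_Re simp: S_def closed_segment_eq_real_ivl\<close>)
  ultimately have "(\<lambda>n. - (bottom n + right n + left n)) \<longlonglongrightarrow> - (0 + 0 + 0)"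
    by (intro tendsto_intros)
  from integral_UNIV_eq_if_symmetric_truncations[OF ai trunc this]
  show "integral UNIV (\<lambda>u. H (Complex u (-1)) / (Complex u (-1) - t)) = 0"
    by (simp add: F_def)
qed

section \<open>A damped sinc kernel\<close>

(* For eps = 0, damped_sine tau 0 z = 2i sin(tau z) and sinc_kernel tau 0 z = sin(tau z)/(pi z).
   The factor damping eps z = (1 - i eps z)^-2 decays like 1/|z|^2 on Im z > -1/eps, and
   damping eps (-z) does so on Im z < 1/eps. *)
definition damping :: "real \<Rightarrow> complex \<Rightarrow> complex" where
  "damping \<epsilon> z = 1 / (1 - \<i> * \<epsilon> * z)\<^sup>2"

definition damped_sine :: "real \<Rightarrow> real \<Rightarrow> complex \<Rightarrow> complex" where
  "damped_sine \<tau> \<epsilon> z = exp (\<i> * \<tau> * z) * damping \<epsilon> z - exp (- (\<i> * \<tau> * z)) * damping \<epsilon> (- z)"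

definition sinc_kernel :: "real \<Rightarrow> real \<Rightarrow> complex \<Rightarrow> complex" where
  "sinc_kernel \<tau> \<epsilon> z =
     (if z = 0 then deriv (damped_sine \<tau> \<epsilon>) 0 else damped_sine \<tau> \<epsilon> z / z) / (2 * pi * \<i>)"

definition sinc_kernel_real :: "real \<Rightarrow> real \<Rightarrow> real \<Rightarrow> real" where
  "sinc_kernel_real \<tau> \<epsilon> d =
     (if d = 0 then (\<tau> + 2 * \<epsilon>) / pi
      else (sin (\<tau> * d) * (1 - \<epsilon>\<^sup>2 * d\<^sup>2) + 2 * \<epsilon> * d * cos (\<tau> * d)) / (pi * d * (1 + \<epsilon>\<^sup>2 * d\<^sup>2)\<^sup>2))"

lemma damping_denominator_nonzero: "-1 < \<epsilon> * Im z \<Longrightarrow> 1 - \<i> * \<epsilon> * z \<noteq> 0"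
proof
  assume "-1 < \<epsilon> * Im z" "1 - \<i> * \<epsilon> * z = 0"
  then have "Re (1 - \<i> * \<epsilon> * z) = 0" by simp
  then show False using \<open>-1 < \<epsilon> * Im z\<close> by simp
qed

lemma holomorphic_damping: "damping \<epsilon> holomorphic_on {z. -1 < \<epsilon> * Im z}"
  unfolding damping_def by (intro holomorphic_intros) (use damping_denominator_nonzero in auto)

lemma holomorphic_damped_sine: "damped_sine \<tau> \<epsilon> holomorphic_on {z. \<bar>\<epsilon> * Im z\<bar> < 1}"
proof -
  have "damping \<epsilon> \<circ> uminus holomorphic_on {z. \<bar>\<epsilon> * Im z\<bar> < 1}"
    by (rule holomorphic_on_compose_gen[OF _ holomorphic_damping]) (auto intro: holomorphic_intros)
  moreover have "damping \<epsilon> holomorphic_on {z. \<bar>\<epsilon> * Im z\<bar> < 1}"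
    by (rule holomorphic_on_subset[OF holomorphic_damping]) auto
  ultimately show ?thesis
    unfolding damped_sine_def o_def by (intro holomorphic_intros)
qed

lemma damped_sine_0 [simp]: "damped_sine \<tau> \<epsilon> 0 = 0"
  by (simp add: damped_sine_def damping_def)

lemma holomorphic_sinc_kernel: "sinc_kernel \<tau> \<epsilon> holomorphic_on {z. \<bar>\<epsilon> * Im z\<bar> < 1}"
proof -
  have "open {z. \<bar>\<epsilon> * Im z\<bar> < 1}"
    by (auto intro!: continuous_intros open_Collect_less)
  from pole_lemma_open[OF holomorphic_damped_sine[of \<tau> \<epsilon>] this, of 0]
  have "(\<lambda>z. if z = 0 then deriv (damped_sine \<tau> \<epsilon>) 0 else damped_sine \<tau> \<epsilon> z / z) holomorphic_on {z. \<bar>\<epsilon> * Im z\<bar> < 1}"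
    by (simp cong: if_cong)
  then show ?thesis
    unfolding sinc_kernel_def by (intro holomorphic_intros) auto
qed

lemma deriv_damped_sine_0: "deriv (damped_sine \<tau> \<epsilon>) 0 = 2 * \<i> * (\<tau> + 2 * \<epsilon>)"
proof -
  have "(damped_sine \<tau> \<epsilon> has_field_derivative 2 * \<i> * (\<tau> + 2 * \<epsilon>)) (at 0)"
    unfolding damped_sine_def damping_def
    by (auto intro!: derivative_eq_intros simp: power2_eq_square algebra_simps)
  then show ?thesis
    by (rule DERIV_imp_deriv)
qed

lemma damped_sine_of_real:
  fixes d :: real
  shows "damped_sine \<tau> \<epsilon> d =
           2 * \<i> * of_real (sin (\<tau> * d) * (1 - \<epsilon>\<^sup>2 * d\<^sup>2) + 2 * \<epsilon> * d * cos (\<tau> * d))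
             / (of_real (1 + \<epsilon>\<^sup>2 * d\<^sup>2))\<^sup>2"
proof -
  define c s where "c = cos (\<tau> * d)" and "s = sin (\<tau> * d)"
  define P Q where "P = 1 - \<i> * \<epsilon> * d" and "Q = 1 + \<i> * \<epsilon> * d"
  have exp_pos: "exp (\<i> * \<tau> * d) = of_real c + \<i> * of_real s"
    and exp_neg: "exp (- (\<i> * \<tau> * d)) = of_real c - \<i> * of_real s"
    using cis_conv_exp[of "\<tau> * d"] cis_conv_exp[of "- \<tau> * d"]
    by (simp_all add: cis.code Complex_eq mult.commute mult.left_commute c_def s_def)
  have "P \<noteq> 0" "Q \<noteq> 0"
    by (simp_all add: P_def Q_def complex_eq_iff)
  moreover have "(of_real (1 + \<epsilon>\<^sup>2 * d\<^sup>2) :: complex) = P * Q"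
    by (simp add: P_def Q_def algebra_simps power2_eq_square)
  moreover have "(of_real c + \<i> * of_real s) * Q\<^sup>2 - (of_real c - \<i> * of_real s) * P\<^sup>2
       = 2 * \<i> * of_real (s * (1 - \<epsilon>\<^sup>2 * d\<^sup>2) + 2 * \<epsilon> * d * c)"
    by (simp add: P_def Q_def complex_eq_iff power2_eq_square algebra_simps)
  moreover have "damped_sine \<tau> \<epsilon> d = ((of_real c + \<i> * of_real s) * Q\<^sup>2 - (of_real c - \<i> * of_real s) * P\<^sup>2) / (P * Q)\<^sup>2"
  proof -
    have dP: "damping \<epsilon> (of_real d) = 1 / P\<^sup>2" and dQ: "damping \<epsilon> (- of_real d) = 1 / Q\<^sup>2"
      by (simp_all add: damping_def P_def Q_def)
    show ?thesis
      unfolding damped_sine_def exp_pos exp_neg dP dQ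
      using \<open>P \<noteq> 0\<close> \<open>Q \<noteq> 0\<close> by (simp add: field_simps)
  qed
  ultimately show ?thesis
    by (simp add: c_def s_def)
qed

lemma sinc_kernel_of_real: "sinc_kernel \<tau> \<epsilon> (of_real d) = of_real (sinc_kernel_real \<tau> \<epsilon> d)"
proof (cases "d = 0")
  case True
  then show ?thesis
    by (simp add: sinc_kernel_def sinc_kernel_real_def deriv_damped_sine_0 field_simps)
next
  case False
  have "0 < 1 + \<epsilon>\<^sup>2 * d\<^sup>2"
    by (simp add: add_pos_nonneg)
  with False show ?thesis
    by (simp add: sinc_kernel_def sinc_kernel_real_def damped_sine_of_real field_simps del: of_real_add)
qed

lemma damping_denominator_lower_bound:
  fixes \<epsilon> x y :: real
  assumes \<epsilon>: "0 < \<epsilon>" "\<epsilon> \<le> 1/4" and y: "-1 \<le> y"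
  shows "\<epsilon>\<^sup>2 * (1 + (x\<^sup>2 + y\<^sup>2)) \<le> 3 * ((1 + \<epsilon> * y)\<^sup>2 + (\<epsilon> * x)\<^sup>2)"
proof -
  have "\<epsilon>\<^sup>2 + \<epsilon>\<^sup>2 * y\<^sup>2 \<le> 3 * (1 + \<epsilon> * y)\<^sup>2"
  proof (cases "0 \<le> y")
    case True
    have "\<epsilon>\<^sup>2 \<le> 1"
      using \<epsilon> by (simp add: power_le_one)
    moreover have "1 + \<epsilon>\<^sup>2 * y\<^sup>2 \<le> (1 + \<epsilon> * y)\<^sup>2"
      using True \<epsilon> by (simp add: power2_eq_square algebra_simps)
    ultimately show ?thesis
      by (smt (verit) zero_le_power2)
  next
    case False
    have "3/4 \<le> 1 + \<epsilon> * y"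
      using \<epsilon> y mult_left_mono[of "-1" y \<epsilon>] by linarith
    then have "(3/4::real)\<^sup>2 \<le> (1 + \<epsilon> * y)\<^sup>2"
      by (rule power_mono) simp
    moreover have "\<epsilon>\<^sup>2 \<le> (1/4)\<^sup>2"
      using \<epsilon> by (intro power_mono) auto
    moreover have "y\<^sup>2 \<le> 1"
      using y False by (simp add: abs_square_le_1)
    then have "\<epsilon>\<^sup>2 * y\<^sup>2 \<le> \<epsilon>\<^sup>2"
      by (simp add: mult_left_le)
    ultimately show ?thesis
      by (simp add: power2_eq_square)
  qed
  moreover have "0 \<le> \<epsilon>\<^sup>2 * x\<^sup>2"
    by simp
  ultimately have "\<epsilon>\<^sup>2 + \<epsilon>\<^sup>2 * y\<^sup>2 \<le> 3 * (1 + \<epsilon> * y)\<^sup>2 + 2 * (\<epsilon>\<^sup>2 * x\<^sup>2)"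
    by linarith
  then show ?thesis
    by (simp add: power_mult_distrib algebra_simps)
qed

lemma norm_damping_le:
  assumes \<epsilon>: "0 < \<epsilon>" "\<epsilon> \<le> 1/4" and z: "-1 \<le> Im z"
  shows "cmod (damping \<epsilon> z) \<le> 3 / (\<epsilon>\<^sup>2 * (1 + (cmod z)\<^sup>2))"
proof -
  have "-1 < \<epsilon> * Im z"
    using \<epsilon> z mult_left_mono[of "-1" "Im z" \<epsilon>] by linarith
  then have "0 < (cmod (1 - \<i> * \<epsilon> * z))\<^sup>2"
    using damping_denominator_nonzero by simp
  moreover have "(cmod (1 - \<i> * \<epsilon> * z))\<^sup>2 = (1 + \<epsilon> * Im z)\<^sup>2 + (\<epsilon> * Re z)\<^sup>2"
    by (simp only: cmod_power2) (simp add: power2_eq_square algebra_simps)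
  then have "\<epsilon>\<^sup>2 * (1 + (cmod z)\<^sup>2) \<le> 3 * (cmod (1 - \<i> * \<epsilon> * z))\<^sup>2"
    using damping_denominator_lower_bound[OF \<epsilon> z] by (simp add: cmod_power2)
  moreover have "0 < \<epsilon>\<^sup>2 * (1 + (cmod z)\<^sup>2)"
    using \<epsilon> by (intro mult_pos_pos add_pos_nonneg) auto
  ultimately show ?thesis
    by (simp add: damping_def norm_divide norm_power divide_simps)
qed

lemma norm_damped_sine_le:
  assumes \<tau>: "0 < \<tau>" and \<epsilon>: "0 < \<epsilon>" "\<epsilon> \<le> 1/4" and z: "\<bar>Im z\<bar> \<le> 1"
  shows "cmod (damped_sine \<tau> \<epsilon> z) \<le> 6 * exp \<tau> / (\<epsilon>\<^sup>2 * (1 + (cmod z)\<^sup>2))"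
proof -
  have "\<bar>\<tau> * Im z\<bar> \<le> \<tau>"
    using \<tau> z mult_left_mono[of "\<bar>Im z\<bar>" 1 \<tau>] by (simp add: abs_mult)
  then have exp_le: "cmod (exp (\<i> * \<tau> * z)) \<le> exp \<tau>" "cmod (exp (- (\<i> * \<tau> * z))) \<le> exp \<tau>"
    by auto
  have damping_le: "cmod (damping \<epsilon> z) \<le> 3 / (\<epsilon>\<^sup>2 * (1 + (cmod z)\<^sup>2))"
    "cmod (damping \<epsilon> (- z)) \<le> 3 / (\<epsilon>\<^sup>2 * (1 + (cmod z)\<^sup>2))"
    using norm_damping_le[OF \<epsilon>, of z] norm_damping_le[OF \<epsilon>, of "- z"] z by auto
  have "cmod (damped_sine \<tau> \<epsilon> z) \<le>
      cmod (exp (\<i> * \<tau> * z)) * cmod (damping \<epsilon> z) + cmod (exp (- (\<i> * \<tau> * z))) * cmod (damping \<epsilon> (- z))"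
    unfolding damped_sine_def norm_mult[symmetric] by (rule norm_triangle_ineq4)
  also have "\<dots> \<le> exp \<tau> * (3 / (\<epsilon>\<^sup>2 * (1 + (cmod z)\<^sup>2))) + exp \<tau> * (3 / (\<epsilon>\<^sup>2 * (1 + (cmod z)\<^sup>2)))"
    by (intro add_mono mult_mono exp_le damping_le) auto
  finally show ?thesis
    by simp
qed

lemma norm_sinc_kernel_le:
  assumes \<tau>: "0 < \<tau>" and \<epsilon>: "0 < \<epsilon>" "\<epsilon> \<le> 1/4" and z: "\<bar>Im z\<bar> \<le> 1" "1 \<le> cmod z"
  shows "cmod (sinc_kernel \<tau> \<epsilon> z) \<le> 6 * exp \<tau> / (\<epsilon>\<^sup>2 * (1 + (cmod z)\<^sup>2))"
proof -
  have "1 \<le> 2 * pi * cmod z"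
    using z pi_gt3 mult_mono[of 1 "2 * pi" 1 "cmod z"] by linarith
  have "z \<noteq> 0"
    using z by auto
  then have "cmod (sinc_kernel \<tau> \<epsilon> z) = cmod (damped_sine \<tau> \<epsilon> z) / (2 * pi * cmod z)"
    by (simp add: sinc_kernel_def norm_divide norm_mult)
  also have "\<dots> \<le> cmod (damped_sine \<tau> \<epsilon> z)"
    using divide_left_mono[OF \<open>1 \<le> 2 * pi * cmod z\<close>, of "cmod (damped_sine \<tau> \<epsilon> z)"] \<open>z \<noteq> 0\<close>
    by simp
  also have "\<dots> \<le> 6 * exp \<tau> / (\<epsilon>\<^sup>2 * (1 + (cmod z)\<^sup>2))"
    by (rule norm_damped_sine_le[OF \<tau> \<epsilon> z(1)])
  finally show ?thesis .
qed

lemma abs_sinc_kernel_real_le_sum: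
  assumes "0 \<le> \<epsilon>" "d \<noteq> 0"
  shows "\<bar>sinc_kernel_real \<tau> \<epsilon> d\<bar> \<le> (\<bar>sin (\<tau> * d)\<bar> / \<bar>d\<bar> + 2 * \<epsilon> / (1 + \<epsilon>\<^sup>2 * d\<^sup>2)) / pi"
proof -
  define s c D where "s = sin (\<tau> * d)" and "c = cos (\<tau> * d)" and "D = 1 + \<epsilon>\<^sup>2 * d\<^sup>2"
  have D: "1 \<le> D"
    by (simp add: D_def)
  have "\<bar>s * (1 - \<epsilon>\<^sup>2 * d\<^sup>2) + 2 * \<epsilon> * d * c\<bar> \<le> \<bar>s\<bar> * D + 2 * \<epsilon> * \<bar>d\<bar>"
  proof -
    have "\<bar>s * (1 - \<epsilon>\<^sup>2 * d\<^sup>2)\<bar> \<le> \<bar>s\<bar> * D"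
      by (auto simp: D_def abs_mult abs_le_iff intro!: mult_left_mono)
    moreover have "\<bar>2 * \<epsilon> * d * c\<bar> \<le> 2 * \<epsilon> * \<bar>d\<bar>"
      using assms(1) by (simp add: abs_mult c_def mult_left_le)
    ultimately show ?thesis
      by (smt (verit) abs_triangle_ineq)
  qed
  then have "\<bar>sinc_kernel_real \<tau> \<epsilon> d\<bar> \<le> (\<bar>s\<bar> * D + 2 * \<epsilon> * \<bar>d\<bar>) / (pi * \<bar>d\<bar> * D\<^sup>2)"
    using assms(2) D
    by (simp add: sinc_kernel_real_def s_def c_def D_def abs_mult abs_divide divide_right_mono)
  also have "\<dots> = (\<bar>s\<bar> / \<bar>d\<bar> / D + 2 * \<epsilon> / D\<^sup>2) / pi"
    using assms(2) D by (simp add: field_simps power2_eq_square)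
  also have "\<dots> \<le> (\<bar>s\<bar> / \<bar>d\<bar> + 2 * \<epsilon> / D) / pi"
  proof -
    have "\<bar>s\<bar> / \<bar>d\<bar> / D \<le> \<bar>s\<bar> / \<bar>d\<bar> / 1"
      using D by (intro divide_left_mono) auto
    moreover have "D \<le> D\<^sup>2"
      using mult_left_mono[OF D, of D] D by (simp add: power2_eq_square)
    then have "2 * \<epsilon> / D\<^sup>2 \<le> 2 * \<epsilon> / D"
      using D assms(1) by (intro divide_left_mono) auto
    ultimately show ?thesis
      by (intro divide_right_mono add_mono) auto
  qed
  finally show ?thesis
    by (simp add: s_def D_def)
qed

lemma abs_sinc_kernel_real_le:
  assumes \<tau>: "0 < \<tau>" and \<epsilon>: "0 \<le> \<epsilon>" "\<epsilon> \<le> 1/4"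
  shows "\<bar>sinc_kernel_real \<tau> \<epsilon> d\<bar> \<le> 2 * (\<tau> + 2) / (pi * (1 + \<bar>d\<bar>))"
proof (cases "d = 0")
  case True
  have "\<tau> + 2 * \<epsilon> \<le> 2 * (\<tau> + 2)"
    using \<tau> \<epsilon> by simp
  then show ?thesis
    using True \<tau> \<epsilon> by (simp add: sinc_kernel_real_def divide_right_mono)
next
  case False
  define D where "D = 1 + \<epsilon>\<^sup>2 * d\<^sup>2"
  have D: "1 \<le> D" "2 * \<epsilon> * \<bar>d\<bar> \<le> D"
  proof -
    show "1 \<le> D"
      by (simp add: D_def)
    have "0 \<le> (1 - \<epsilon> * \<bar>d\<bar>)\<^sup>2"
      by simp
    then show "2 * \<epsilon> * \<bar>d\<bar> \<le> D"
      by (simp add: D_def power2_eq_square algebra_simps)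
  qed
  have sum_le: "\<bar>sin (\<tau> * d)\<bar> / \<bar>d\<bar> + 2 * \<epsilon> / D \<le> 2 * (\<tau> + 2) / (1 + \<bar>d\<bar>)"
  proof (cases "\<bar>d\<bar> \<le> 1")
    case True
    have "\<bar>sin (\<tau> * d)\<bar> / \<bar>d\<bar> \<le> \<tau>"
      using abs_sin_x_le_abs_x[of "\<tau> * d"] False \<tau> by (simp add: abs_mult divide_le_eq)
    moreover have "2 * \<epsilon> / D \<le> 1/2"
      using \<epsilon> D by (simp add: divide_le_eq)
    moreover have "(\<tau> + 2) * (1 + \<bar>d\<bar>) \<le> 2 * (\<tau> + 2)"
      using mult_left_mono[of "1 + \<bar>d\<bar>" 2 "\<tau> + 2"] True \<tau> by (simp add: mult.commute)
    then have "\<tau> + 2 \<le> 2 * (\<tau> + 2) / (1 + \<bar>d\<bar>)"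
      by (simp add: pos_le_divide_eq add_pos_nonneg)
    ultimately show ?thesis
      by linarith
  next
    case False
    have "\<bar>sin (\<tau> * d)\<bar> / \<bar>d\<bar> \<le> 1 / \<bar>d\<bar>"
      by (simp add: divide_right_mono)
    moreover have "2 * \<epsilon> / D \<le> 1 / \<bar>d\<bar>"
      using D \<open>d \<noteq> 0\<close> by (simp add: divide_simps mult.commute)
    moreover have "0 \<le> \<tau> * (\<bar>d\<bar> * 2)"
      using \<tau> by simp
    then have "2 / \<bar>d\<bar> \<le> 2 * (\<tau> + 2) / (1 + \<bar>d\<bar>)"
      using False by (simp add: divide_simps algebra_simps)
    ultimately show ?thesis
      by (simp add: add_divide_distrib[symmetric])
  qed
  have "\<bar>sinc_kernel_real \<tau> \<epsilon> d\<bar> \<le> (\<bar>sin (\<tau> * d)\<bar> / \<bar>d\<bar> + 2 * \<epsilon> / D) / pi"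
    using abs_sinc_kernel_real_le_sum[OF \<epsilon>(1) False] by (simp add: D_def)
  also have "\<dots> \<le> 2 * (\<tau> + 2) / (1 + \<bar>d\<bar>) / pi"
    using sum_le by (rule divide_right_mono) simp
  finally show ?thesis
    by (simp add: mult.commute)
qed

lemma tendsto_sinc_kernel_real: "((\<lambda>\<epsilon>. sinc_kernel_real \<tau> \<epsilon> d) \<longlongrightarrow> sinc_kernel_real \<tau> 0 d) (at 0)"
  by (cases "d = 0") (auto simp: sinc_kernel_real_def intro!: tendsto_eq_intros)

section \<open>The reproducing formula for entire functions of exponential type\<close>

locale exponential_type =
  fixes G :: "complex \<Rightarrow> complex" and \<tau> C :: real
  assumes type_pos: "0 < \<tau>"
    and entire: "G holomorphic_on UNIV"
    and growth: "\<And>z. cmod (G z) \<le> C * exp (\<tau> * \<bar>Im z\<bar>)"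
begin

lemma growth_nonneg: "0 \<le> C"
proof -
  have "0 \<le> C * exp (\<tau> * \<bar>Im 0\<bar>)"
    using growth[of 0] norm_ge_zero order_trans by blast
  then show ?thesis
    by simp
qed

lemma upper_damped_line_integral:
  fixes t \<epsilon> :: real
  assumes \<epsilon>: "0 < \<epsilon>" "\<epsilon> \<le> 1/4"
  defines "H \<equiv> \<lambda>w::complex. G w * exp (\<i> * \<tau> * (w - t)) * damping \<epsilon> (w - t)"
  shows "(\<lambda>u. H (Complex u (-1)) / (Complex u (-1) - t)) absolutely_integrable_on UNIV"
    and "integral UNIV (\<lambda>u. H (Complex u (-1)) / (Complex u (-1) - t)) = 2 * pi * \<i> * G t"
proof -
  have "H holomorphic_on {z. -1 \<le> Im z}"
  proof -
    have "-1 < \<epsilon> * Im z" if "-1 \<le> Im z" for z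
      using \<epsilon> that mult_left_mono[of "-1" "Im z" \<epsilon>] by linarith
    then have "(\<lambda>w. damping \<epsilon> (w - t)) holomorphic_on {z. -1 \<le> Im z}"
      by (intro holomorphic_on_compose_gen[OF _ holomorphic_damping, unfolded o_def])
         (auto intro!: holomorphic_intros)
    then show ?thesis
      unfolding H_def by (intro holomorphic_intros holomorphic_on_subset[OF entire]) auto
  qed
  moreover have "norm (H w) \<le> C * exp (2 * \<tau>) * 3 / \<epsilon>\<^sup>2 / (1 + (cmod (w - t))\<^sup>2)" if w: "-1 \<le> Im w" for w
  proof -
    have "\<bar>Im w\<bar> - Im w \<le> 2"
      using w by (auto simp: abs_if)
    then have "\<tau> * (\<bar>Im w\<bar> - Im w) \<le> \<tau> * 2"
      using type_pos by (intro mult_left_mono) auto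
    have "cmod (G w * exp (\<i> * \<tau> * (w - t))) = cmod (G w) * exp (- \<tau> * Im w)"
      by (simp add: norm_mult)
    also have "\<dots> \<le> C * exp (\<tau> * \<bar>Im w\<bar>) * exp (- \<tau> * Im w)"
      by (rule mult_right_mono[OF growth]) simp
    also have "\<dots> \<le> C * exp (2 * \<tau>)"
      using growth_nonneg \<open>\<tau> * (\<bar>Im w\<bar> - Im w) \<le> \<tau> * 2\<close>
      by (simp add: mult.assoc exp_add[symmetric] mult_left_mono algebra_simps)
    finally have "cmod (G w * exp (\<i> * \<tau> * (w - t))) \<le> C * exp (2 * \<tau>)" .
    moreover have "cmod (damping \<epsilon> (w - t)) \<le> 3 / (\<epsilon>\<^sup>2 * (1 + (cmod (w - t))\<^sup>2))"
      using w by (intro norm_damping_le[OF \<epsilon>]) simp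
    ultimately have "norm (H w) \<le> C * exp (2 * \<tau>) * (3 / (\<epsilon>\<^sup>2 * (1 + (cmod (w - t))\<^sup>2)))"
      unfolding H_def norm_mult[of _ "damping \<epsilon> (w - t)"] using growth_nonneg by (intro mult_mono) auto
    then show ?thesis
      by simp
  qed
  ultimately have "(\<lambda>u. H (Complex u (-1)) / (Complex u (-1) - t)) absolutely_integrable_on UNIV \<and>
      integral UNIV (\<lambda>u. H (Complex u (-1)) / (Complex u (-1) - t)) = 2 * pi * \<i> * H t"
    using Cauchy_integral_formula_horizontal_line by blast
  then show "(\<lambda>u. H (Complex u (-1)) / (Complex u (-1) - t)) absolutely_integrable_on UNIV"
    and "integral UNIV (\<lambda>u. H (Complex u (-1)) / (Complex u (-1) - t)) = 2 * pi * \<i> * G t"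
    by (simp_all add: H_def damping_def)
qed

lemma lower_damped_line_integral:
  fixes t \<epsilon> :: real
  assumes \<epsilon>: "0 < \<epsilon>" "\<epsilon> \<le> 1/4"
  defines "H \<equiv> \<lambda>w::complex. G w * exp (- (\<i> * \<tau> * (w - t))) * damping \<epsilon> (- (w - t))"
  shows "(\<lambda>u. H (Complex u (-1)) / (Complex u (-1) - t)) absolutely_integrable_on UNIV"
    and "integral UNIV (\<lambda>u. H (Complex u (-1)) / (Complex u (-1) - t)) = 0"
proof -
  have "H holomorphic_on {z. Im z \<le> -1}"
  proof -
    have "\<epsilon> * Im z < 1" if "Im z \<le> -1" for z
      using \<epsilon> that mult_left_mono[of "Im z" "-1" \<epsilon>] by linarith
    then have "(\<lambda>w. damping \<epsilon> (- (w - t))) holomorphic_on {z. Im z \<le> -1}"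
      by (intro holomorphic_on_compose_gen[OF _ holomorphic_damping, unfolded o_def])
         (auto intro!: holomorphic_intros)
    then show ?thesis
      unfolding H_def by (intro holomorphic_intros holomorphic_on_subset[OF entire]) auto
  qed
  moreover have "norm (H w) \<le> C * 3 / \<epsilon>\<^sup>2 / (1 + (cmod (w - t))\<^sup>2)" if w: "Im w \<le> -1" for w
  proof -
    have "cmod (G w * exp (- (\<i> * \<tau> * (w - t)))) = cmod (G w) * exp (\<tau> * Im w)"
      by (simp add: norm_mult)
    also have "\<dots> \<le> C * exp (\<tau> * \<bar>Im w\<bar>) * exp (\<tau> * Im w)"
      by (rule mult_right_mono[OF growth]) simp
    also have "\<dots> = C"
      using w by (simp add: mult.assoc exp_add[symmetric])
    finally have "cmod (G w * exp (- (\<i> * \<tau> * (w - t)))) \<le> C" .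
    moreover have "cmod (damping \<epsilon> (- (w - t))) \<le> 3 / (\<epsilon>\<^sup>2 * (1 + (cmod (w - t))\<^sup>2))"
      using w norm_damping_le[OF \<epsilon>, of "- (w - t)"] by (simp add: norm_minus_commute)
    ultimately have "norm (H w) \<le> C * (3 / (\<epsilon>\<^sup>2 * (1 + (cmod (w - t))\<^sup>2)))"
      unfolding H_def norm_mult[of _ "damping \<epsilon> (- (w - t))"] using growth_nonneg by (intro mult_mono) auto
    then show ?thesis
      by simp
  qed
  ultimately show "(\<lambda>u. H (Complex u (-1)) / (Complex u (-1) - t)) absolutely_integrable_on UNIV"
    and "integral UNIV (\<lambda>u. H (Complex u (-1)) / (Complex u (-1) - t)) = 0"
    using Cauchy_theorem_horizontal_line by blast+
qed

lemma damped_reproducing_formula: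
  fixes t \<epsilon> :: real
  assumes \<epsilon>: "0 < \<epsilon>" "\<epsilon> \<le> 1/4"
  shows "(\<lambda>u. G (of_real u) * of_real (sinc_kernel_real \<tau> \<epsilon> (u - t))) absolutely_integrable_on UNIV"
    and "integral UNIV (\<lambda>u. G (of_real u) * of_real (sinc_kernel_real \<tau> \<epsilon> (u - t))) = G t"
proof -
  define \<Phi> where "\<Phi> z = G z * sinc_kernel \<tau> \<epsilon> (z - t)" for z
  have on_real: "\<Phi> (Complex u 0) = G (of_real u) * of_real (sinc_kernel_real \<tau> \<epsilon> (u - t))" for u
    unfolding \<Phi>_def using sinc_kernel_of_real[of \<tau> \<epsilon> "u - t"] by (simp add: Complex_eq)
  have "\<bar>\<epsilon> * Im z\<bar> < 1" if "-1 \<le> Im z" "Im z \<le> 0" for z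
    using \<epsilon> that mult_left_mono[of "\<bar>Im z\<bar>" 1 \<epsilon>] by (simp add: abs_mult)
  then have "(\<lambda>z. sinc_kernel \<tau> \<epsilon> (z - t)) holomorphic_on {z. -1 \<le> Im z \<and> Im z \<le> 0}"
    by (intro holomorphic_on_compose_gen[OF _ holomorphic_sinc_kernel, unfolded o_def])
       (auto intro!: holomorphic_intros)
  then have holo: "\<Phi> holomorphic_on {z. -1 \<le> Im z \<and> Im z \<le> 0}"
    unfolding \<Phi>_def by (intro holomorphic_intros holomorphic_on_subset[OF entire]) auto
  have decay: "norm (\<Phi> z) \<le> C * exp \<tau> * (6 * exp \<tau> / \<epsilon>\<^sup>2) / (1 + (Re z - t)\<^sup>2)"
    if z: "-1 \<le> Im z" "Im z \<le> 0" "1 \<le> \<bar>Re z - t\<bar>" for z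
  proof -
    have "exp (\<tau> * \<bar>Im z\<bar>) \<le> exp \<tau>"
      using z type_pos mult_left_mono[of "\<bar>Im z\<bar>" 1 \<tau>] by simp
    then have "cmod (G z) \<le> C * exp \<tau>"
      using growth[of z] growth_nonneg by (meson mult_left_mono order_trans)
    moreover have "(Re z - t)\<^sup>2 \<le> (cmod (z - t))\<^sup>2"
      using abs_Re_le_cmod[of "z - t"] by (simp add: abs_le_square_iff[symmetric])
    then have "cmod (sinc_kernel \<tau> \<epsilon> (z - t)) \<le> 6 * exp \<tau> / (\<epsilon>\<^sup>2 * (1 + (Re z - t)\<^sup>2))"
      using norm_sinc_kernel_le[OF type_pos \<epsilon>, of "z - t"] z abs_Re_le_cmod[of "z - t"] \<epsilon>
      by (auto elim!: order_trans intro!: divide_left_mono mult_left_mono add_pos_nonneg mult_pos_pos)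
    ultimately have "norm (\<Phi> z) \<le> C * exp \<tau> * (6 * exp \<tau> / (\<epsilon>\<^sup>2 * (1 + (Re z - t)\<^sup>2)))"
      unfolding \<Phi>_def norm_mult using growth_nonneg by (intro mult_mono) auto
    then show ?thesis
      by simp
  qed
  note shift = integral_horizontal_line_shift[of "-1" 0, OF _ holo decay]
  show "(\<lambda>u. G (of_real u) * of_real (sinc_kernel_real \<tau> \<epsilon> (u - t))) absolutely_integrable_on UNIV"
    using shift(2) by (simp add: on_real)
  (* The e^{i tau z} part is integrated by closing the contour upwards, the e^{-i tau z} part
     by closing it downwards. *)
  define up where "up w = G w * exp (\<i> * \<tau> * (w - t)) * damping \<epsilon> (w - t) / (w - t)" for w
  define down where "down w = G w * exp (- (\<i> * \<tau> * (w - t))) * damping \<epsilon> (- (w - t)) / (w - t)" for w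
  note up = upper_damped_line_integral[OF \<epsilon>, of t, folded up_def]
  note down = lower_damped_line_integral[OF \<epsilon>, of t, folded down_def]
  have "\<Phi> (Complex u (-1)) = (up (Complex u (-1)) - down (Complex u (-1))) / (2 * pi * \<i>)" for u
  proof -
    have "Complex u (-1) - t \<noteq> 0"
      by (simp add: complex_eq_iff)
    then show ?thesis
      by (simp add: \<Phi>_def up_def down_def sinc_kernel_def damped_sine_def diff_divide_distrib
            right_diff_distrib ac_simps)
  qed
  then have "integral UNIV (\<lambda>u. \<Phi> (Complex u (-1)))
      = (integral UNIV (\<lambda>u. up (Complex u (-1))) - integral UNIV (\<lambda>u. down (Complex u (-1)))) / (2 * pi * \<i>)"
    using up(1) down(1) by (simp add: integral_diff set_lebesgue_integral_eq_integral(1))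
  also have "\<dots> = G t"
    using up(2) down(2) by simp
  finally show "integral UNIV (\<lambda>u. G (of_real u) * of_real (sinc_kernel_real \<tau> \<epsilon> (u - t))) = G t"
    using shift(3) by (simp add: on_real)
qed

theorem reproducing_formula:
  fixes t :: real
  assumes L2: "(\<lambda>u::real. (cmod (G u))\<^sup>2) integrable_on UNIV"
  shows "(\<lambda>u. G u * of_real (sinc_kernel_real \<tau> 0 (u - t))) absolutely_integrable_on UNIV"
    and "integral UNIV (\<lambda>u. G u * of_real (sinc_kernel_real \<tau> 0 (u - t))) = G t"
proof -
  define \<epsilon> where "\<epsilon> n = 1 / (real n + 4)" for n :: nat
  have \<epsilon>: "0 < \<epsilon> n" "\<epsilon> n \<le> 1/4" for n
    by (auto simp: \<epsilon>_def divide_simps)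
  define K where "K = 2 * (\<tau> + 2) / pi"
  define f where "f n u = G u * of_real (sinc_kernel_real \<tau> (\<epsilon> n) (u - t))" for n u
  define g where "g u = G u * of_real (sinc_kernel_real \<tau> 0 (u - t))" for u
  (* AM-GM: |G u| * K/(1+|u-t|) \<le> (|G u|^2 + K^2/(1+(u-t)^2))/2. *)
  define h where "h u = ((cmod (G u))\<^sup>2 + K\<^sup>2 * (1 / (1 + (u - t)\<^sup>2))) / 2" for u
  have "h integrable_on UNIV"
    unfolding h_def
    by (intro integrable_on_divide integrable_add L2 integrable_on_mult_right integrable_inverse_one_plus_square)
  have dominated: "norm (G u * of_real (sinc_kernel_real \<tau> \<epsilon>' (u - t))) \<le> h u"
    if "0 \<le> \<epsilon>'" "\<epsilon>' \<le> 1/4" for u \<epsilon>'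
  proof -
    have "\<bar>sinc_kernel_real \<tau> \<epsilon>' (u - t)\<bar> \<le> K / (1 + \<bar>u - t\<bar>)"
      using abs_sinc_kernel_real_le[OF type_pos that, of "u - t"] by (simp add: K_def)
    then have "norm (G u * of_real (sinc_kernel_real \<tau> \<epsilon>' (u - t))) \<le> cmod (G u) * (K / (1 + \<bar>u - t\<bar>))"
      unfolding norm_mult by (intro mult_left_mono) auto
    also have "\<dots> \<le> ((cmod (G u))\<^sup>2 + (K / (1 + \<bar>u - t\<bar>))\<^sup>2) / 2"
      using sum_squares_bound[of "cmod (G u)" "K / (1 + \<bar>u - t\<bar>)"] by (simp add: ac_simps)
    also have "\<dots> \<le> h u"
    proof -
      have "1 + (u - t)\<^sup>2 \<le> (1 + \<bar>u - t\<bar>)\<^sup>2"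
        by (simp add: power2_eq_square algebra_simps)
      then have "1 / (1 + \<bar>u - t\<bar>)\<^sup>2 \<le> 1 / (1 + (u - t)\<^sup>2)"
        by (intro divide_left_mono) (auto intro!: mult_pos_pos add_pos_nonneg)
      then have "K\<^sup>2 * (1 / (1 + \<bar>u - t\<bar>)\<^sup>2) \<le> K\<^sup>2 * (1 / (1 + (u - t)\<^sup>2))"
        by (rule mult_left_mono) simp
      then have "(K / (1 + \<bar>u - t\<bar>))\<^sup>2 \<le> K\<^sup>2 * (1 / (1 + (u - t)\<^sup>2))"
        by (simp add: power_divide)
      then show ?thesis
        unfolding h_def by (intro divide_right_mono add_left_mono) auto
    qed
    finally show ?thesis .
  qed
  have f_integrable: "f n absolutely_integrable_on UNIV" for n
    unfolding f_def by (rule damped_reproducing_formula(1)[OF \<epsilon>])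
  have f_limit: "(\<lambda>n. f n u) \<longlonglongrightarrow> g u" for u
  proof -
    have "\<epsilon> \<longlonglongrightarrow> 0"
      unfolding \<epsilon>_def by real_asymp
    moreover have "\<forall>\<^sub>F n in sequentially. \<epsilon> n \<noteq> 0"
      using \<epsilon> by (simp add: less_imp_neq[symmetric])
    ultimately have "filterlim \<epsilon> (at 0) sequentially"
      by (simp add: filterlim_at)
    then have "(\<lambda>n. sinc_kernel_real \<tau> (\<epsilon> n) (u - t)) \<longlonglongrightarrow> sinc_kernel_real \<tau> 0 (u - t)"
      by (rule filterlim_compose[OF tendsto_sinc_kernel_real])
    then show ?thesis
      unfolding f_def g_def by (intro tendsto_mult tendsto_const tendsto_of_real)
  qed
  have f_dominated: "norm (f n u) \<le> h u" for n u
    unfolding f_def using \<epsilon>[of n] by (intro dominated) auto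
  have "(\<lambda>n. integral UNIV (f n)) \<longlonglongrightarrow> integral UNIV g"
    using f_integrable set_lebesgue_integral_eq_integral(1)
    by (intro dominated_convergence(2)[OF _ \<open>h integrable_on UNIV\<close> f_dominated f_limit]) blast
  moreover have "integral UNIV (f n) = G t" for n
    unfolding f_def by (rule damped_reproducing_formula(2)[OF \<epsilon>])
  ultimately have "(\<lambda>n. G t) \<longlonglongrightarrow> integral UNIV g"
    by simp
  then show "integral UNIV (\<lambda>u. G u * of_real (sinc_kernel_real \<tau> 0 (u - t))) = G t"
    unfolding g_def[symmetric] by (simp add: LIMSEQ_const_iff)
  show "(\<lambda>u. G u * of_real (sinc_kernel_real \<tau> 0 (u - t))) absolutely_integrable_on UNIV"
    unfolding g_def[symmetric] using dominated[of 0]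
    by (intro dominated_convergence_absolutely_integrable[OF f_integrable \<open>h integrable_on UNIV\<close> _ f_limit])
       (auto simp: g_def)
qed

end

section \<open>Mellin--Bernstein functions on the logarithmic scale\<close>

(* exp maps the strip 2 pi k \<le> Im w < 2 pi (k+1) onto sheet k of the Riemann surface of the
   logarithm; there log_lift is g_k \<circ> exp, with the boundary values gp k on the line Im w = 2 pi k. *)
definition log_lift ::
  "(int \<Rightarrow> complex \<Rightarrow> complex) \<Rightarrow> (int \<Rightarrow> real \<Rightarrow> complex) \<Rightarrow> (int \<Rightarrow> real \<Rightarrow> complex) \<Rightarrow> complex \<Rightarrow> complex"
  where "log_lift g gp gm w =
    (let k = \<lfloor>Im w / (2 * pi)\<rfloor> in branch_val g gp gm k (exp (Re w)) (Im w - 2 * pi * k))"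

lemma floor_divide_2pi_eq:
  fixes k :: int
  assumes "2 * pi * k \<le> y" "y < 2 * pi * (k + 1)"
  shows "\<lfloor>y / (2 * pi)\<rfloor> = k"
  using assms by (simp add: floor_eq_iff pos_le_divide_eq pos_divide_less_eq mult.commute)

lemma floor_divide_2pi_bounds:
  "2 * pi * \<lfloor>y / (2 * pi)\<rfloor> \<le> y" "y < 2 * pi * (\<lfloor>y / (2 * pi)\<rfloor> + 1)"
proof -
  have "of_int \<lfloor>y / (2 * pi)\<rfloor> \<le> y / (2 * pi)" "y / (2 * pi) < of_int \<lfloor>y / (2 * pi)\<rfloor> + 1"
    by linarith+
  then show "2 * pi * \<lfloor>y / (2 * pi)\<rfloor> \<le> y" "y < 2 * pi * (\<lfloor>y / (2 * pi)\<rfloor> + 1)"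
    using pi_gt_zero by (simp_all add: divide_simps algebra_simps)
qed

lemma exp_eq_polar_shifted:
  fixes k :: int
  shows "exp w = of_real (exp (Re w)) * cis (Im w - 2 * pi * k)"
proof -
  have "cis (2 * pi * of_int k) = 1"
    by (simp add: cis_multiple_2pi)
  then show ?thesis
    by (simp add: exp_eq_polar cis_divide[symmetric])
qed

lemma log_lift_strip:
  fixes k :: int
  assumes "2 * pi * k < Im w" "Im w < 2 * pi * (k + 1)"
  shows "log_lift g gp gm w = g k (exp w)"
proof -
  have "\<lfloor>Im w / (2 * pi)\<rfloor> = k"
    using assms by (intro floor_divide_2pi_eq) auto
  moreover have "Im w - 2 * pi * k \<noteq> 0" "Im w - 2 * pi * k \<noteq> 2 * pi"
    using assms by (auto simp: algebra_simps)
  ultimately show ?thesis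
    by (simp add: log_lift_def branch_val_def exp_eq_polar_shifted[of w k])
qed

lemma log_lift_line:
  fixes k :: int
  assumes "Im w = 2 * pi * k"
  shows "log_lift g gp gm w = gp k (exp (Re w))" and "exp w = of_real (exp (Re w))"
proof -
  have "\<lfloor>Im w / (2 * pi)\<rfloor> = k"
    using assms by (intro floor_divide_2pi_eq) auto
  then show "log_lift g gp gm w = gp k (exp (Re w))"
    using assms by (simp add: log_lift_def branch_val_def)
  show "exp w = of_real (exp (Re w))"
    using exp_eq_polar_shifted[of w k] assms by simp
qed

lemma exp_in_slit:
  fixes k :: int
  assumes "2 * pi * k < Im w" "Im w < 2 * pi * (k + 1)"
  shows "exp w \<in> slit"
proof -
  define \<theta> where "\<theta> = Im w - 2 * pi * k"
  have \<theta>: "0 < \<theta>" "\<theta> < 2 * pi"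
    using assms by (auto simp: \<theta>_def algebra_simps)
  have exp_w: "exp w = of_real (exp (Re w)) * cis \<theta>"
    unfolding \<theta>_def by (rule exp_eq_polar_shifted)
  show ?thesis
  proof (cases "\<theta> = pi")
    case True
    then have "Re (exp w) < 0"
      using exp_w by simp
    then show ?thesis
      unfolding slit_def by auto
  next
    case False
    have "sin \<theta> \<noteq> 0"
      using \<theta> False sin_zero_pi_iff[of \<theta>] sin_zero_iff_int2[of \<theta>] by (auto simp: sin_gt_zero)
    then have "Im (exp w) \<noteq> 0"
      using exp_w by simp
    then show ?thesis
      unfolding slit_def by auto
  qed
qed

lemma log_lift_near_line:
  fixes k :: int
  assumes jump: "\<forall>x>0. gm (k - 1) x = gp k x"
    and w: "\<bar>Im w - 2 * pi * k\<bar> < pi / 2"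
  shows "log_lift g gp gm w =
           (if Im (exp w) < 0 then g (k - 1) (exp w)
            else if Im (exp w) = 0 then gm (k - 1) (Re (exp w)) else g k (exp w))"
proof -
  define \<theta> where "\<theta> = Im w - 2 * pi * k"
  have Im_exp: "Im (exp w) = exp (Re w) * sin \<theta>"
    using exp_eq_polar_shifted[of w k] by (simp add: \<theta>_def)
  consider "\<theta> < 0" | "\<theta> = 0" | "0 < \<theta>"
    by linarith
  then show ?thesis
  proof cases
    case 1
    then have "log_lift g gp gm w = g (k - 1) (exp w)"
      using w pi_gt_zero by (intro log_lift_strip) (auto simp: \<theta>_def algebra_simps)
    moreover have "0 < sin (- \<theta>)"
      using 1 w by (intro sin_gt_zero) (auto simp: \<theta>_def)
    then have "sin \<theta> < 0"
      by simp
    ultimately show ?thesis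
      by (simp add: Im_exp mult_pos_neg)
  next
    case 2
    then show ?thesis
      using log_lift_line[of w k] jump by (simp add: \<theta>_def)
  next
    case 3
    then have "log_lift g gp gm w = g k (exp w)"
      using w pi_gt_zero by (intro log_lift_strip) (auto simp: \<theta>_def algebra_simps)
    moreover have "0 < sin \<theta>"
      using 3 w by (intro sin_gt_zero) (auto simp: \<theta>_def)
    ultimately show ?thesis
      by (simp add: Im_exp mult_less_0_iff)
  qed
qed

lemma holomorphic_log_lift:
  assumes holo: "\<forall>k. g k holomorphic_on slit"
    and jump: "\<forall>k. \<forall>x>0. gm k x = gp (k + 1) x"
    and glued: "\<forall>k. \<forall>x>0. \<forall>r. 0 < r \<and> r \<le> x \<longrightarrow>
          (\<lambda>z. if Im z < 0 then g k z else if Im z = 0 then gm k (Re z) else g (k + 1) z)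
            analytic_on ball (of_real x) r"
  shows "log_lift g gp gm holomorphic_on UNIV"
proof -
  have "\<exists>U. open U \<and> w0 \<in> U \<and> log_lift g gp gm holomorphic_on U" for w0
  proof -
    define k where "k = \<lfloor>Im w0 / (2 * pi)\<rfloor>"
    note k = floor_divide_2pi_bounds[of "Im w0", folded k_def]
    show ?thesis
    proof (cases "2 * pi * k < Im w0")
      case True
      define U where "U = {w. 2 * pi * k < Im w \<and> Im w < 2 * pi * (k + 1)}"
      have "open U"
        unfolding U_def by (auto intro!: continuous_intros open_Collect_conj open_Collect_less)
      moreover have "(g k \<circ> exp) holomorphic_on U"
        using holo by (intro holomorphic_on_compose_gen[OF _ holo[rule_format]])
          (auto intro: holomorphic_intros exp_in_slit simp: U_def)
      then have "log_lift g gp gm holomorphic_on U"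
        by (rule holomorphic_transform) (auto simp: U_def log_lift_strip)
      ultimately show ?thesis
        using True k by (auto simp: U_def)
    next
      case False
      then have line: "Im w0 = 2 * pi * k"
        using k by auto
      define x0 where "x0 = exp (Re w0)"
      have "0 < x0"
        by (simp add: x0_def)
      define \<Psi> where "\<Psi> z = (if Im z < 0 then g (k - 1) z else if Im z = 0 then gm (k - 1) (Re z) else g k z)" for z
      have "(\<lambda>z. if Im z < 0 then g (k - 1) z else if Im z = 0 then gm (k - 1) (Re z) else g (k - 1 + 1) z)
              analytic_on ball (of_real x0) x0"
        by (rule glued[rule_format]) (simp_all add: \<open>0 < x0\<close>)
      then have "\<Psi> holomorphic_on ball (of_real x0) x0"
        unfolding \<Psi>_def diff_add_cancel by (rule analytic_imp_holomorphic)
      define U where "U = exp -` ball (of_real x0) x0 \<inter> {w. \<bar>Im w - 2 * pi * k\<bar> < pi / 2}"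
      have "open U"
        unfolding U_def by (intro open_Int open_vimage) (auto intro!: continuous_intros open_Collect_less)
      moreover have "w0 \<in> U"
        using log_lift_line(2)[OF line] line by (simp add: U_def x0_def)
      moreover have "(\<Psi> \<circ> exp) holomorphic_on U"
        by (rule holomorphic_on_compose_gen[OF _ \<open>\<Psi> holomorphic_on ball (of_real x0) x0\<close>])
           (auto intro: holomorphic_intros simp: U_def)
      then have "log_lift g gp gm holomorphic_on U"
        by (rule holomorphic_transform) (use jump in \<open>auto simp: U_def \<Psi>_def log_lift_near_line\<close>)
      ultimately show ?thesis
        by blast
    qed
  qed
  then have "log_lift g gp gm analytic_on UNIV"
    unfolding analytic_on_def by (meson openE holomorphic_on_subset)
  then show ?thesis
    by (rule analytic_imp_holomorphic)
qed

lemma norm_log_lift_le: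
  assumes "\<forall>k. \<forall>\<theta>\<in>{0..2*pi}. \<forall>r>0. cmod (branch_val g gp gm k r \<theta>) \<le> C * exp (T * \<bar>2 * pi * of_int k + \<theta>\<bar>)"
  shows "cmod (log_lift g gp gm z) \<le> C * exp (T * \<bar>Im z\<bar>)"
proof -
  define k where "k = \<lfloor>Im z / (2 * pi)\<rfloor>"
  have "Im z - 2 * pi * k \<in> {0..2*pi}"
    using floor_divide_2pi_bounds[of "Im z", folded k_def] by (auto simp: algebra_simps)
  with assms have "cmod (branch_val g gp gm k (exp (Re z)) (Im z - 2 * pi * k))
      \<le> C * exp (T * \<bar>2 * pi * k + (Im z - 2 * pi * k)\<bar>)"
    using exp_gt_zero[of "Re z"] by blast
  then show ?thesis
    by (simp add: log_lift_def k_def[symmetric])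
qed

lemma mellin_bernstein_log_lift:
  assumes "mellin_bernstein c T f" "0 < T"
  obtains G C where "exponential_type G T C"
    and "\<And>u. G (of_real u) = of_real (exp (c * u)) * f (exp u)"
proof -
  from assms(1) obtain g gp gm C where
    holo: "\<forall>k. g k holomorphic_on slit" and
    jump: "\<forall>k. \<forall>x>0. gm k x = gp (k + 1) x" and
    sheet0: "\<forall>x>0. gp 0 x = of_real (x powr c) * f x" and
    glued: "\<forall>k. \<forall>x>0. \<forall>r. 0 < r \<and> r \<le> x \<longrightarrow>
          (\<lambda>z. if Im z < 0 then g k z else if Im z = 0 then gm k (Re z) else g (k + 1) z)
            analytic_on ball (of_real x) r" and
    growth: "\<forall>k. \<forall>\<theta>\<in>{0..2*pi}. \<forall>r>0.
          cmod (branch_val g gp gm k r \<theta>) \<le> C * exp (T * \<bar>2 * pi * of_int k + \<theta>\<bar>)"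
    using assms(1) unfolding mellin_bernstein_def by (elim conjE exE) blast
  show ?thesis
  proof (rule that)
    show "exponential_type (log_lift g gp gm) T C"
      using assms(2) holomorphic_log_lift[OF holo jump glued] norm_log_lift_le[OF growth]
      by unfold_locales auto
    show "log_lift g gp gm (of_real u) = of_real (exp (c * u)) * f (exp u)" for u
      using log_lift_line(1)[of "of_real u" 0] sheet0 by (simp add: powr_def)
  qed
qed

lemma range_exp_real: "range exp = {0::real<..}"
proof -
  have "y \<in> range exp" if "0 < y" for y :: real
    using exp_ln[OF that] by (metis rangeI)
  then show ?thesis
    by auto
qed

lemma has_absolute_integral_exp_substitution:
  fixes F :: "real \<Rightarrow> 'a::euclidean_space"
  shows "(\<lambda>u. exp u *\<^sub>R F (exp u)) absolutely_integrable_on UNIV \<and> integral UNIV (\<lambda>u. exp u *\<^sub>R F (exp u)) = b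
     \<longleftrightarrow> F absolutely_integrable_on {0<..} \<and> integral {0<..} F = b"
  using has_absolute_integral_change_of_variables_real[of UNIV exp exp F b]
  by (auto intro!: derivative_eq_intros inj_onI simp: range_exp_real)

lemma X2_log_scale_square_integrable:
  assumes "X2 c f"
  shows "(\<lambda>u. (cmod (of_real (exp (c * u)) * f (exp u)))\<^sup>2) integrable_on UNIV"
proof -
  define F where "F y = (cmod (f y * of_real (y powr (c - 1/2))))\<^sup>2" for y
  have "F absolutely_integrable_on range exp"
    using assms unfolding X2_def F_def range_exp_real by blast
  then have "(\<lambda>u. \<bar>exp u\<bar> * F (exp u)) absolutely_integrable_on UNIV"
    by (subst absolutely_integrable_change_of_variables_1'[symmetric]) (auto intro!: derivative_eq_intros inj_onI)
  moreover have "\<bar>exp u\<bar> * F (exp u) = (cmod (of_real (exp (c * u)) * f (exp u)))\<^sup>2" for u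
  proof -
    have "exp u * (exp ((c - 1/2) * u))\<^sup>2 = (exp (c * u))\<^sup>2"
      by (simp add: power2_eq_square exp_add[symmetric] algebra_simps)
    then show ?thesis
      by (simp add: F_def norm_mult powr_def power_mult_distrib algebra_simps)
  qed
  ultimately show ?thesis
    using set_lebesgue_integral_eq_integral(1) by fastforce
qed

lemma lin_exp_eq_sinc_kernel_real:
  assumes "0 < \<sigma>" "0 < x"
  shows "lin (c / \<sigma>) ((x / exp u) powr \<sigma>) = x powr (-c) / \<sigma> * exp (c * u) * sinc_kernel_real (pi * \<sigma>) 0 (u - ln x)"
proof -
  define t where "t = ln x"
  have x: "x = exp t" and x_powr: "x powr (-c) = exp (- c * t)"
    using assms(2) by (simp_all add: t_def powr_def)
  have power: "(x / exp u) powr \<sigma> = exp (\<sigma> * (t - u))"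
    unfolding x by (simp add: exp_diff[symmetric] powr_def)
  show ?thesis
  proof (cases "u = t")
    case True
    then have "(x / exp u) powr \<sigma> = 1"
      unfolding power by simp
    then have "lin (c / \<sigma>) ((x / exp u) powr \<sigma>) = 1"
      by (simp add: lin_def)
    moreover have "x powr (-c) * exp (c * u) = 1"
      using True by (simp add: x_powr exp_add[symmetric])
    ultimately show ?thesis
      using assms(1) True by (simp add: sinc_kernel_real_def t_def)
  next
    case False
    then have "exp (\<sigma> * (t - u)) \<noteq> 1"
      using assms(1) by simp
    then have "lin (c / \<sigma>) ((x / exp u) powr \<sigma>) = exp (- c * (t - u)) * sin (pi * (\<sigma> * (t - u))) / (pi * (\<sigma> * (t - u)))"
      unfolding power lin_def using assms(1) by (simp add: powr_def)
    moreover have "exp (- c * (t - u)) = exp (- c * t) * exp (c * u)"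
      by (simp add: exp_add[symmetric] algebra_simps)
    moreover have "sin (pi * \<sigma> * (u - t)) = - sin (pi * (\<sigma> * (t - u)))"
      by (simp add: sin_minus[symmetric] algebra_simps)
    ultimately show ?thesis
      using assms(1) False
      by (simp add: sinc_kernel_real_def x_powr t_def[symmetric] field_simps)
  qed
qed

theorem theorem8:
  fixes c \<sigma> :: real and f :: "real \<Rightarrow> complex"
  assumes "\<sigma> > 0"
    and "mellin_bernstein c (pi * \<sigma>) f"
    and "x > 0"
  shows "set_integrable lebesgue {0<..}
           (\<lambda>y. f y * of_real (lin (c / \<sigma>) ((x / y) powr \<sigma>) / y))
       \<and> f x = of_real \<sigma> * (LINT y:{0<..}|lebesgue. f y * of_real (lin (c / \<sigma>) ((x / y) powr \<sigma>) / y))"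
proof -
  obtain G C where G: "exponential_type G (pi * \<sigma>) C"
    and G_real: "\<And>u. G (of_real u) = of_real (exp (c * u)) * f (exp u)"
    using mellin_bernstein_log_lift[OF assms(2)] assms(1) by auto
  have "X2 c f"
    using assms(2) by (simp add: mellin_bernstein_def)
  then have "(\<lambda>u::real. (cmod (G u))\<^sup>2) integrable_on UNIV"
    unfolding G_real by (rule X2_log_scale_square_integrable)
  note reproducing = exponential_type.reproducing_formula[OF G this, of "ln x"]
  define K where "K = complex_of_real (x powr (-c) / \<sigma>)"
  define F where "F y = f y * of_real (lin (c / \<sigma>) ((x / y) powr \<sigma>) / y)" for y
  have "exp u *\<^sub>R F (exp u) = K * (G u * of_real (sinc_kernel_real (pi * \<sigma>) 0 (u - ln x)))" for u
    using lin_exp_eq_sinc_kernel_real[OF assms(1,3), of c u]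
    by (simp add: F_def K_def G_real scaleR_conv_of_real field_simps)
  then have F_integrable: "F absolutely_integrable_on {0<..}" and "integral {0<..} F = K * G (ln x)"
    using has_absolute_integral_exp_substitution[of F "K * G (ln x)"] reproducing
    by (simp_all add: set_integrable_mult_right integral_mult_right)
  then have "(LINT y:{0<..}|lebesgue. F y) = K * G (ln x)"
    using set_lebesgue_integral_eq_integral(2)[OF F_integrable] by simp
  moreover have "f x = of_real \<sigma> * (K * G (ln x))"
    using assms(1,3) G_real[of "ln x"]
    by (simp add: K_def powr_def exp_minus field_simps)
  ultimately show ?thesis
    using F_integrable unfolding F_def[abs_def, symmetric] by simp
qed

end
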